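(* Let $M_n=V\,{\rm diag}(\Lambda_{n1},\dots,\Lambda_{nd})V^{-1}$, $n=1,\dots,N$, with $V$ real invertible and $\Lambda_{ni}$ real, such that $\gamma=\min_{i>i'}\sum_{n=1}^N(\Lambda_{ni}-\Lambda_{ni'})^2>0$, and let $U_\circ$ be an orthogonal matrix with ${\rm low}(U_\circ^TM_nU_\circ)=0$ for all $n$. Then $$T=\sum_nt_n^Tt_n,\qquad t_n=P_{\rm low}\big(1\otimes U_\circ^TM_n^TU_\circ-U_\circ^TM_nU_\circ\otimes1\big)P_{\rm low}^T$$ is invertible, and $\sigma_{\min}(T)\ge\frac{\gamma}{\kappa(V)^4}$ and $\|T^{-1}\|\le\sqrt{\frac{d(d-1)}2}\,\frac{\kappa(V)^4}{\gamma}$.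
   Context: All matrices are real. ${\rm low}(A)$ is the strictly lower-triangular part of $A$. $\otimes$ is the Kronecker product, $1$ the identity. $P_{\rm low}\in\{0,1\}^{\frac{d(d-1)}2\times d^2}$ has as rows the standard basis row vectors of $\mathbb R^{d^2}$ selecting (in increasing order) the entries of the column-wise vectorization ${\rm vec}(A)$ corresponding to strictly lower-triangular entries of $A$. $\|\cdot\|$ is the Frobenius norm, $\sigma_{\min}$ the smallest singular value, $\kappa(V)=\sigma_{\max}(V)/\sigma_{\min}(V)$. *)

theory Defs
  imports "Jordan_Normal_Form.Matrix"
begin

definition low_part :: "real mat \<Rightarrow> real mat" where
  "low_part A = mat (dim_row A) (dim_col A) (\<lambda>(i,j). if j < i then A $$ (i,j) else 0)"

definition kron :: "real mat \<Rightarrow> real mat \<Rightarrow> real mat" where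
  "kron A B = mat (dim_row A * dim_row B) (dim_col A * dim_col B)
     (\<lambda>(i,j). A $$ (i div dim_row B, j div dim_col B) * B $$ (i mod dim_row B, j mod dim_col B))"

(* Column-wise vectorization of a d x d matrix: position k (0-based) holds entry
   (k mod d, k div d).  low_positions d lists, in increasing order, the positions k
   corresponding to strictly lower-triangular entries (row > column). *)
definition low_positions :: "nat \<Rightarrow> nat list" where
  "low_positions d = filter (\<lambda>k. k div d < k mod d) [0..<d*d]"

definition P_low :: "nat \<Rightarrow> real mat" where
  "P_low d = mat (length (low_positions d)) (d*d) (\<lambda>(r,k). if low_positions d ! r = k then 1 else 0)"

definition frob_norm :: "real mat \<Rightarrow> real" where
  "frob_norm A = sqrt (\<Sum>i<dim_row A. \<Sum>j<dim_col A. (A $$ (i,j))^2)"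

definition vnorm :: "real vec \<Rightarrow> real" where
  "vnorm x = sqrt (x \<bullet> x)"

definition sigma_max :: "real mat \<Rightarrow> real" where
  "sigma_max A = Sup {vnorm (A *\<^sub>v x) | x. x \<in> carrier_vec (dim_col A) \<and> vnorm x = 1}"

definition sigma_min :: "real mat \<Rightarrow> real" where
  "sigma_min A = Inf {vnorm (A *\<^sub>v x) | x. x \<in> carrier_vec (dim_col A) \<and> vnorm x = 1}"

definition kappa :: "real mat \<Rightarrow> real" where
  "kappa V = sigma_max V / sigma_min V"

definition minv :: "real mat \<Rightarrow> real mat" where
  "minv A = (SOME B. B \<in> carrier_mat (dim_row A) (dim_row A) \<and>
                     A * B = 1\<^sub>m (dim_row A) \<and> B * A = 1\<^sub>m (dim_row A))"

definition diag_of :: "nat \<Rightarrow> (nat \<Rightarrow> real) \<Rightarrow> real mat" where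
  "diag_of d f = mat d d (\<lambda>(i,j). if i = j then f i else 0)"

definition t_mat :: "nat \<Rightarrow> real mat \<Rightarrow> real mat \<Rightarrow> real mat" where
  "t_mat d U M = P_low d *
     (kron (1\<^sub>m d) (transpose_mat U * transpose_mat M * U) - kron (transpose_mat U * M * U) (1\<^sub>m d))
     * transpose_mat (P_low d)"

definition msum :: "nat \<Rightarrow> nat \<Rightarrow> (nat \<Rightarrow> real mat) \<Rightarrow> real mat" where
  "msum k N f = foldr (\<lambda>n acc. f n + acc) [1..<N+1] (0\<^sub>m k k)"

definition gamma_sep :: "nat \<Rightarrow> nat \<Rightarrow> (nat \<Rightarrow> nat \<Rightarrow> real) \<Rightarrow> real" where
  "gamma_sep d N \<Lambda> = Min {(\<Sum>n=1..N. (\<Lambda> n i - \<Lambda> n i')^2) | i i'. i' < i \<and> i < d}"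

end

theory Submission
  imports Defs "Jordan_Normal_Form.Determinant"
begin

text \<open>
  Put \<open>B\<^sub>n = U\<^sup>T M\<^sub>n\<^sup>T U = W D\<^sub>n W\<^sup>-\<^sup>1\<close> with \<open>W = U\<^sup>T V\<^sup>-\<^sup>T\<close>; the hypothesis on \<open>U\<close> makes every \<open>B\<^sub>n\<close>
  lower triangular. If \<open>X\<close> is the strictly lower triangular matrix carrying \<open>x\<close>, then
  \<open>x\<^sup>T T x = \<Sum>\<^sub>n \<parallel>B\<^sub>n X - X B\<^sub>n\<parallel>\<^sup>2\<close>. Conjugation by \<open>W\<close> turns these commutators into
  \<open>D\<^sub>n Y - Y D\<^sub>n\<close> with \<open>Y = W\<^sup>-\<^sup>1 X W\<close>, and \<open>\<Sum>\<^sub>n \<parallel>D\<^sub>n Y - Y D\<^sub>n\<parallel>\<^sup>2 = \<Sum>\<^sub>i\<^sub>j (\<Sum>\<^sub>n (\<Lambda>\<^sub>n\<^sub>i - \<Lambda>\<^sub>n\<^sub>j)\<^sup>2) Y\<^sub>i\<^sub>j\<^sup>2 \<ge> \<gamma> \<parallel>Y\<parallel>\<^sup>2\<close>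
  because \<open>Y\<close> has zero diagonal: the common eigenvectors of the triangular \<open>B\<^sub>n\<close> form a flag
  adapted to the strictly triangular \<open>X\<close>. Each passage between \<open>X\<close> and \<open>Y\<close> costs a factor
  \<open>\<kappa>(V)\<^sup>2\<close>, so \<open>x\<^sup>T T x \<ge> \<gamma> \<kappa>(V)\<^sup>-\<^sup>4 \<parallel>x\<parallel>\<^sup>2\<close>; invertibility, the bound on \<open>\<sigma>\<^sub>m\<^sub>i\<^sub>n(T)\<close> and, column by
  column, the bound on \<open>\<parallel>T\<^sup>-\<^sup>1\<parallel>\<close> follow.
\<close>

section \<open>Euclidean, Frobenius and operator norms\<close>

lemma scalar_prod_self_nonneg: "0 \<le> v \<bullet> (v :: real vec)"
  using conjugate_square_ge_0_vec[of v] unfolding vec_conjugate_real .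

lemma scalar_prod_self_eq_0_iff:
  "(v :: real vec) \<in> carrier_vec n \<Longrightarrow> v \<bullet> v = 0 \<longleftrightarrow> v = 0\<^sub>v n"
  using conjugate_square_eq_0_vec[of v n] by simp

lemma vnorm_nonneg: "0 \<le> vnorm v"
  unfolding vnorm_def by (simp add: scalar_prod_self_nonneg)

lemma vnorm_square: "vnorm v ^ 2 = v \<bullet> v"
  unfolding vnorm_def using scalar_prod_self_nonneg by simp

lemma vnorm_unit_vec: "i < n \<Longrightarrow> vnorm (unit_vec n i) = 1"
  by (simp add: vnorm_def)

lemma vnorm_smult: "v \<in> carrier_vec n \<Longrightarrow> vnorm (c \<cdot>\<^sub>v v) = \<bar>c\<bar> * vnorm v"
  unfolding vnorm_def by (simp add: real_sqrt_mult real_sqrt_abs2 mult.assoc[symmetric])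

lemma cauchy_schwarz_vec:
  fixes x y :: "real vec"
  assumes x: "x \<in> carrier_vec n" and y: "y \<in> carrier_vec n"
  shows "(x \<bullet> y)^2 \<le> (x \<bullet> x) * (y \<bullet> y)"
proof -
  define A B C where "A = x \<bullet> x" and "B = y \<bullet> y" and "C = x \<bullet> y"
  have sums: "(\<Sum>i<n. x $ i * x $ i) = A" "(\<Sum>i<n. y $ i * y $ i) = B" "(\<Sum>i<n. x $ i * y $ i) = C"
    using x y by (simp_all add: A_def B_def C_def scalar_prod_def lessThan_atLeast0)
  have "0 \<le> (\<Sum>i<n. (B * x $ i - C * y $ i)^2)"
    by (intro sum_nonneg) auto
  also have "\<dots> = B^2 * (\<Sum>i<n. x $ i * x $ i) - 2 * B * C * (\<Sum>i<n. x $ i * y $ i)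
      + C^2 * (\<Sum>i<n. y $ i * y $ i)"
    by (simp add: power2_eq_square algebra_simps sum.distrib sum_subtractf sum_distrib_left)
  also have "\<dots> = B * (A * B - C^2)"
    unfolding sums by (simp add: power2_eq_square algebra_simps)
  finally have key: "0 \<le> B * (A * B - C^2)" .
  show ?thesis
  proof (cases "B = 0")
    case True
    then have "y = 0\<^sub>v n" using scalar_prod_self_eq_0_iff[OF y] by (simp add: B_def)
    then show ?thesis using x by simp
  next
    case False
    then have "0 < B" using scalar_prod_self_nonneg[of y] by (simp add: B_def)
    then show ?thesis using key by (simp add: zero_le_mult_iff A_def B_def C_def mult.commute)
  qed
qed

definition frob_sq :: "real mat \<Rightarrow> real" where
  "frob_sq A = (\<Sum>i<dim_row A. \<Sum>j<dim_col A. (A $$ (i,j))^2)"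

lemma frob_norm_eq_sqrt_frob_sq: "frob_norm A = sqrt (frob_sq A)"
  unfolding frob_norm_def frob_sq_def ..

lemma frob_sq_transpose: "frob_sq (transpose_mat A) = frob_sq A"
  unfolding frob_sq_def by (subst sum.swap) (auto intro!: sum.cong)

lemma frob_sq_rows: "A \<in> carrier_mat m n \<Longrightarrow> frob_sq A = (\<Sum>i<m. row A i \<bullet> row A i)"
  unfolding frob_sq_def scalar_prod_def
  by (auto simp: power2_eq_square lessThan_atLeast0 intro!: sum.cong)

lemma frob_sq_cols: "A \<in> carrier_mat m n \<Longrightarrow> frob_sq A = (\<Sum>j<n. col A j \<bullet> col A j)"
  using frob_sq_rows[of "transpose_mat A" n m] by (simp add: frob_sq_transpose)

lemma mult_vec_sq_le_frob_sq:
  assumes A: "A \<in> carrier_mat m n" and y: "y \<in> carrier_vec n"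
  shows "(A *\<^sub>v y) \<bullet> (A *\<^sub>v y) \<le> frob_sq A * (y \<bullet> y)"
proof -
  have "(A *\<^sub>v y) \<bullet> (A *\<^sub>v y) = (\<Sum>i<m. (row A i \<bullet> y)^2)"
    using A unfolding scalar_prod_def[of "A *\<^sub>v y"] by (auto simp: power2_eq_square lessThan_atLeast0)
  also have "\<dots> \<le> (\<Sum>i<m. (row A i \<bullet> row A i) * (y \<bullet> y))"
    using A y by (intro sum_mono cauchy_schwarz_vec) auto
  also have "\<dots> = frob_sq A * (y \<bullet> y)"
    using A by (simp add: frob_sq_rows sum_distrib_right)
  finally show ?thesis .
qed

definition op_norm_sq_le :: "real mat \<Rightarrow> real \<Rightarrow> bool" where
  "op_norm_sq_le A c \<longleftrightarrow> (\<forall>y \<in> carrier_vec (dim_col A). (A *\<^sub>v y) \<bullet> (A *\<^sub>v y) \<le> c * (y \<bullet> y))"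

lemma op_norm_sq_leD:
  "op_norm_sq_le A c \<Longrightarrow> A \<in> carrier_mat m n \<Longrightarrow> y \<in> carrier_vec n
    \<Longrightarrow> (A *\<^sub>v y) \<bullet> (A *\<^sub>v y) \<le> c * (y \<bullet> y)"
  unfolding op_norm_sq_le_def by auto

lemma op_norm_sq_le_mult:
  assumes A: "A \<in> carrier_mat m n" and B: "B \<in> carrier_mat n k"
    and opA: "op_norm_sq_le A a" and opB: "op_norm_sq_le B b" and a: "0 \<le> a"
  shows "op_norm_sq_le (A * B) (a * b)"
  unfolding op_norm_sq_le_def
proof
  fix y :: "real vec" assume "y \<in> carrier_vec (dim_col (A * B))"
  then have y: "y \<in> carrier_vec k" using B by simp
  have "(A * B *\<^sub>v y) \<bullet> (A * B *\<^sub>v y) = (A *\<^sub>v (B *\<^sub>v y)) \<bullet> (A *\<^sub>v (B *\<^sub>v y))"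
    using A B y by simp
  also have "\<dots> \<le> a * ((B *\<^sub>v y) \<bullet> (B *\<^sub>v y))"
    using opA A B y by (intro op_norm_sq_leD) auto
  also have "\<dots> \<le> a * (b * (y \<bullet> y))"
    using opB a B y by (intro mult_left_mono op_norm_sq_leD) auto
  finally show "(A * B *\<^sub>v y) \<bullet> (A * B *\<^sub>v y) \<le> a * b * (y \<bullet> y)" by simp
qed

lemma op_norm_sq_le_transpose:
  assumes A: "A \<in> carrier_mat m n" and op: "op_norm_sq_le A c" and c: "0 \<le> c"
  shows "op_norm_sq_le (transpose_mat A) c"
  unfolding op_norm_sq_le_def
proof
  fix y :: "real vec" assume "y \<in> carrier_vec (dim_col (transpose_mat A))"
  then have y: "y \<in> carrier_vec m" using A by simp
  define z where "z = transpose_mat A *\<^sub>v y"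
  have z: "z \<in> carrier_vec n" using A y by (simp add: z_def)
  have "z \<bullet> z = y \<bullet> (A *\<^sub>v z)"
    using transpose_vec_mult_scalar[OF A z y] by (simp add: z_def)
  then have "(z \<bullet> z)^2 \<le> (y \<bullet> y) * ((A *\<^sub>v z) \<bullet> (A *\<^sub>v z))"
    using cauchy_schwarz_vec[OF y, of "A *\<^sub>v z"] A z by simp
  also have "\<dots> \<le> (y \<bullet> y) * (c * (z \<bullet> z))"
    using op A z by (intro mult_left_mono scalar_prod_self_nonneg op_norm_sq_leD)
  finally have "(z \<bullet> z) * (z \<bullet> z) \<le> (c * (y \<bullet> y)) * (z \<bullet> z)"
    by (simp add: power2_eq_square algebra_simps)
  then show "(transpose_mat A *\<^sub>v y) \<bullet> (transpose_mat A *\<^sub>v y) \<le> c * (y \<bullet> y)"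
    using c scalar_prod_self_nonneg[of z] scalar_prod_self_nonneg[of y]
    by (cases "z \<bullet> z = 0") (auto simp: z_def mult_le_cancel_right)
qed

lemma op_norm_sq_le_orthogonal:
  assumes Q: "Q \<in> carrier_mat m n" and orth: "transpose_mat Q * Q = 1\<^sub>m n"
  shows "op_norm_sq_le Q 1"
  unfolding op_norm_sq_le_def
proof
  fix y :: "real vec" assume "y \<in> carrier_vec (dim_col Q)"
  then have y: "y \<in> carrier_vec n" using Q by simp
  have Qy: "Q *\<^sub>v y \<in> carrier_vec m" using Q y by simp
  have "(Q *\<^sub>v y) \<bullet> (Q *\<^sub>v y) = (transpose_mat Q *\<^sub>v (Q *\<^sub>v y)) \<bullet> y"
    using transpose_vec_mult_scalar[OF Q y Qy] by simp
  also have "transpose_mat Q *\<^sub>v (Q *\<^sub>v y) = y"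
    using Q y orth by (simp flip: assoc_mult_mat_vec[of _ n m Q n])
  finally show "(Q *\<^sub>v y) \<bullet> (Q *\<^sub>v y) \<le> 1 * (y \<bullet> y)" by simp
qed

lemma frob_sq_mult_left_le:
  assumes A: "A \<in> carrier_mat m n" and H: "H \<in> carrier_mat n k" and op: "op_norm_sq_le A c"
  shows "frob_sq (A * H) \<le> c * frob_sq H"
proof -
  have "frob_sq (A * H) = (\<Sum>j<k. col (A * H) j \<bullet> col (A * H) j)"
    using A H by (simp add: frob_sq_cols[of _ m k])
  also have "\<dots> = (\<Sum>j<k. (A *\<^sub>v col H j) \<bullet> (A *\<^sub>v col H j))"
    by (intro sum.cong refl) (metis col_mult2[OF A H] lessThan_iff)
  also have "\<dots> \<le> (\<Sum>j<k. c * (col H j \<bullet> col H j))"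
    using op A H by (intro sum_mono op_norm_sq_leD) auto
  also have "\<dots> = c * frob_sq H"
    using H by (simp add: frob_sq_cols sum_distrib_left)
  finally show ?thesis .
qed

lemma frob_sq_mult_right_le:
  assumes H: "H \<in> carrier_mat k n" and A: "A \<in> carrier_mat n m"
    and op: "op_norm_sq_le (transpose_mat A) c"
  shows "frob_sq (H * A) \<le> c * frob_sq H"
  using frob_sq_mult_left_le[of "transpose_mat A" m n "transpose_mat H" k c] H A op
  by (simp add: transpose_mult[OF H A, symmetric] frob_sq_transpose)

section \<open>Singular values\<close>

lemma sigma_bounds:
  assumes A: "A \<in> carrier_mat m n" and y: "y \<in> carrier_vec n"
  shows "sigma_min A * vnorm y \<le> vnorm (A *\<^sub>v y)" "vnorm (A *\<^sub>v y) \<le> sigma_max A * vnorm y"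
proof -
  define E where "E = {vnorm (A *\<^sub>v x) | x. x \<in> carrier_vec (dim_col A) \<and> vnorm x = 1}"
  have "bdd_below E"
    unfolding E_def by (rule bdd_belowI[of _ 0]) (auto simp: vnorm_nonneg)
  moreover have "bdd_above E"
  proof (rule bdd_aboveI[of _ "sqrt (frob_sq A)"])
    fix e assume "e \<in> E"
    then obtain x where x: "x \<in> carrier_vec n" "vnorm x = 1" and e: "e = vnorm (A *\<^sub>v x)"
      using A unfolding E_def by auto
    have "x \<bullet> x = 1" using x(2) vnorm_square[of x] by simp
    then show "e \<le> sqrt (frob_sq A)"
      unfolding e vnorm_def using mult_vec_sq_le_frob_sq[OF A x(1)] by simp
  qed
  ultimately have bounds: "sigma_min A \<le> e \<and> e \<le> sigma_max A" if "e \<in> E" for e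
    using that unfolding sigma_min_def sigma_max_def E_def[symmetric]
    by (auto intro: cInf_lower cSup_upper)
  have "sigma_min A * vnorm y \<le> vnorm (A *\<^sub>v y) \<and> vnorm (A *\<^sub>v y) \<le> sigma_max A * vnorm y"
  proof (cases "y = 0\<^sub>v n")
    case True
    then have "(A *\<^sub>v y) \<bullet> (A *\<^sub>v y) = 0"
      using mult_vec_sq_le_frob_sq[OF A y] scalar_prod_self_nonneg[of "A *\<^sub>v y"] by simp
    then show ?thesis using True by (simp add: vnorm_def)
  next
    case False
    then have pos: "0 < vnorm y"
      using y scalar_prod_self_eq_0_iff[OF y] scalar_prod_self_nonneg[of y] by (simp add: vnorm_def)
    define u where "u = (1 / vnorm y) \<cdot>\<^sub>v y"
    have u: "u \<in> carrier_vec n" "vnorm u = 1"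
      using y pos by (simp_all add: u_def vnorm_smult)
    have "A *\<^sub>v u = (1 / vnorm y) \<cdot>\<^sub>v (A *\<^sub>v y)"
      unfolding u_def by (rule mult_mat_vec[OF A y])
    then have "vnorm (A *\<^sub>v u) = vnorm (A *\<^sub>v y) / vnorm y"
      using vnorm_smult[of "A *\<^sub>v y" m] A y pos by simp
    moreover have "vnorm (A *\<^sub>v u) \<in> E"
      using A u unfolding E_def by auto
    ultimately have "sigma_min A \<le> vnorm (A *\<^sub>v y) / vnorm y \<and> vnorm (A *\<^sub>v y) / vnorm y \<le> sigma_max A"
      using bounds by metis
    then show ?thesis
      using pos by (simp add: field_simps)
  qed
  then show "sigma_min A * vnorm y \<le> vnorm (A *\<^sub>v y)" "vnorm (A *\<^sub>v y) \<le> sigma_max A * vnorm y"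
    by auto
qed

lemma sigma_min_greatest:
  assumes n: "0 < n" and A: "A \<in> carrier_mat m n"
    and lower: "\<And>x. x \<in> carrier_vec n \<Longrightarrow> c * vnorm x \<le> vnorm (A *\<^sub>v x)"
  shows "c \<le> sigma_min A"
  unfolding sigma_min_def
proof (rule cInf_greatest)
  have "vnorm (unit_vec n 0) = 1"
    using n by (rule vnorm_unit_vec)
  then show "{vnorm (A *\<^sub>v x) | x. x \<in> carrier_vec (dim_col A) \<and> vnorm x = 1} \<noteq> {}"
    using A unit_vec_carrier[of n 0] by blast
qed (use A lower in fastforce)

lemma op_norm_sq_le_sigma_max:
  assumes A: "A \<in> carrier_mat m n"
  shows "op_norm_sq_le A (sigma_max A ^ 2)"
  unfolding op_norm_sq_le_def
proof
  fix y :: "real vec" assume "y \<in> carrier_vec (dim_col A)"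
  then have y: "y \<in> carrier_vec n" using A by simp
  have "vnorm (A *\<^sub>v y) ^ 2 \<le> (sigma_max A * vnorm y) ^ 2"
    using sigma_bounds(2)[OF A y] by (intro power_mono vnorm_nonneg)
  then show "(A *\<^sub>v y) \<bullet> (A *\<^sub>v y) \<le> sigma_max A ^ 2 * (y \<bullet> y)"
    by (simp add: vnorm_square power_mult_distrib)
qed

lemma op_norm_sq_le_inverse:
  assumes V: "V \<in> carrier_mat n n" and Vi: "Vi \<in> carrier_mat n n" and VVi: "V * Vi = 1\<^sub>m n"
    and pos: "0 < sigma_min V"
  shows "op_norm_sq_le Vi (1 / sigma_min V ^ 2)"
  unfolding op_norm_sq_le_def
proof
  fix y :: "real vec" assume "y \<in> carrier_vec (dim_col Vi)"
  then have y: "y \<in> carrier_vec n" using Vi by simp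
  have "V *\<^sub>v (Vi *\<^sub>v y) = y"
    using V Vi y VVi by (simp flip: assoc_mult_mat_vec[of _ n n Vi n])
  then have "sigma_min V * vnorm (Vi *\<^sub>v y) \<le> vnorm y"
    using sigma_bounds(1)[OF V, of "Vi *\<^sub>v y"] Vi y by simp
  then have "(sigma_min V * vnorm (Vi *\<^sub>v y)) ^ 2 \<le> vnorm y ^ 2"
    using pos by (intro power_mono) (auto simp: vnorm_nonneg)
  then show "(Vi *\<^sub>v y) \<bullet> (Vi *\<^sub>v y) \<le> 1 / sigma_min V ^ 2 * (y \<bullet> y)"
    using pos by (simp add: vnorm_square power_mult_distrib field_simps)
qed

lemma sigma_min_pos:
  assumes n: "0 < n" and V: "V \<in> carrier_mat n n" and Vi: "Vi \<in> carrier_mat n n"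
    and ViV: "Vi * V = 1\<^sub>m n"
  shows "0 < sigma_min V"
proof -
  have inverse_bound: "vnorm x \<le> sigma_max Vi * vnorm (V *\<^sub>v x)" if x: "x \<in> carrier_vec n" for x
  proof -
    have "Vi *\<^sub>v (V *\<^sub>v x) = x"
      using V Vi x ViV by (simp flip: assoc_mult_mat_vec[of _ n n V n])
    then show ?thesis using sigma_bounds(2)[OF Vi, of "V *\<^sub>v x"] V x by simp
  qed
  have "1 \<le> sigma_max Vi * vnorm (V *\<^sub>v unit_vec n 0)"
    using inverse_bound[of "unit_vec n 0"] vnorm_unit_vec[OF n] by simp
  then have smax: "0 < sigma_max Vi"
    using vnorm_nonneg[of "V *\<^sub>v unit_vec n 0"] by (smt (verit) mult_nonpos_nonneg)
  have "1 / sigma_max Vi \<le> sigma_min V"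
  proof (rule sigma_min_greatest[OF n V])
    fix x :: "real vec" assume "x \<in> carrier_vec n"
    then show "1 / sigma_max Vi * vnorm x \<le> vnorm (V *\<^sub>v x)"
      using inverse_bound smax by (simp add: divide_le_eq mult.commute)
  qed
  then show ?thesis using smax by (smt (verit) divide_pos_pos)
qed

lemma kappa_pos:
  assumes n: "0 < n" and V: "V \<in> carrier_mat n n" and Vi: "Vi \<in> carrier_mat n n"
    and ViV: "Vi * V = 1\<^sub>m n"
  shows "0 < kappa V"
proof -
  have "vnorm (unit_vec n 0) = 1"
    using n by (rule vnorm_unit_vec)
  then have "sigma_min V \<le> sigma_max V"
    using sigma_bounds[OF V, of "unit_vec n 0"] n by simp
  then show ?thesis
    using sigma_min_pos[OF n V Vi ViV] by (simp add: kappa_def)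
qed

section \<open>Common eigenvectors of triangular matrices\<close>

lemma sum_eq_single:
  assumes "finite A" "a \<in> A" "\<And>k. k \<in> A \<Longrightarrow> k \<noteq> a \<Longrightarrow> g k = 0"
  shows "sum g A = g a"
  using sum.mono_neutral_left[of A "{a}" g] assms by auto

lemma diag_of_carrier [simp]: "diag_of d f \<in> carrier_mat d d"
  unfolding diag_of_def by simp

lemma dim_diag_of [simp]: "dim_row (diag_of d f) = d" "dim_col (diag_of d f) = d"
  unfolding diag_of_def by simp_all

lemma transpose_diag_of [simp]: "transpose_mat (diag_of d f) = diag_of d f"
  unfolding diag_of_def by (intro eq_matI) auto

lemma diag_of_mult_index:
  assumes "Y \<in> carrier_mat d k" "i < d" "j < k"
  shows "(diag_of d f * Y) $$ (i,j) = f i * Y $$ (i,j)"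
proof -
  have "(diag_of d f * Y) $$ (i,j) = (\<Sum>l<d. (if i = l then f i else 0) * Y $$ (l,j))"
    using assms unfolding diag_of_def by (auto simp: scalar_prod_def lessThan_atLeast0 intro!: sum.cong)
  also have "\<dots> = f i * Y $$ (i,j)"
    using assms by (subst sum_eq_single[of _ i]) auto
  finally show ?thesis .
qed

lemma mult_diag_of_index:
  assumes "Y \<in> carrier_mat k d" "i < k" "j < d"
  shows "(Y * diag_of d f) $$ (i,j) = Y $$ (i,j) * f j"
proof -
  have "(Y * diag_of d f) $$ (i,j) = (\<Sum>l<d. Y $$ (i,l) * (if l = j then f j else 0))"
    using assms unfolding diag_of_def by (auto simp: scalar_prod_def lessThan_atLeast0 intro!: sum.cong)
  also have "\<dots> = Y $$ (i,j) * f j"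
    using assms by (subst sum_eq_single[of _ j]) auto
  finally show ?thesis .
qed

lemma col_eigenvector_of_mult_diag:
  assumes A: "A \<in> carrier_mat n n" and W: "W \<in> carrier_mat n n"
    and AW: "A * W = W * diag_of n f" and j: "j < n"
  shows "A *\<^sub>v col W j = f j \<cdot>\<^sub>v col W j"
proof -
  have "A *\<^sub>v col W j = col (W * diag_of n f) j"
    using col_mult2[OF A W j] AW by simp
  also have "\<dots> = f j \<cdot>\<^sub>v col W j"
  proof (rule eq_vecI)
    fix i assume "i < dim_vec (f j \<cdot>\<^sub>v col W j)"
    then have i: "i < n" using W by simp
    have "col (W * diag_of n f) j $ i = (W * diag_of n f) $$ (i,j)"
      using W i j by (subst index_col) auto
    also have "\<dots> = W $$ (i,j) * f j"
      by (rule mult_diag_of_index[OF W i j])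
    finally show "col (W * diag_of n f) j $ i = (f j \<cdot>\<^sub>v col W j) $ i"
      using W i j by simp
  qed (use W in simp)
  finally show ?thesis .
qed

lemma col_neq_0_of_left_inverse:
  fixes L A :: "real mat"
  assumes L: "L \<in> carrier_mat n n" and A: "A \<in> carrier_mat n n" and LA: "L * A = 1\<^sub>m n"
    and j: "j < n"
  shows "col A j \<noteq> 0\<^sub>v n"
proof
  assume "col A j = 0\<^sub>v n"
  moreover have "L *\<^sub>v 0\<^sub>v n = 0\<^sub>v n"
    using L by (intro eq_vecI) auto
  ultimately have "col (L * A) j = 0\<^sub>v n"
    using col_mult2[OF L A j] by simp
  moreover have "col (L * A) j $ j = 1"
    using LA j by simp
  ultimately show False
    using j by simp
qed

definition lower_triangular :: "'a::zero mat \<Rightarrow> bool" where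
  "lower_triangular A \<longleftrightarrow> (\<forall>i<dim_row A. \<forall>j<dim_col A. i < j \<longrightarrow> A $$ (i,j) = 0)"

definition strictly_lower_triangular :: "'a::zero mat \<Rightarrow> bool" where
  "strictly_lower_triangular A \<longleftrightarrow> (\<forall>i<dim_row A. \<forall>j<dim_col A. i \<le> j \<longrightarrow> A $$ (i,j) = 0)"

lemma lower_triangular_eigenvalue_at_leading_entry:
  fixes B :: "real mat"
  assumes B: "B \<in> carrier_mat n n" and low: "lower_triangular B"
    and w: "w \<in> carrier_vec n" and eig: "B *\<^sub>v w = \<mu> \<cdot>\<^sub>v w"
    and f: "f < n" "w $ f \<noteq> 0" and before: "\<And>k. k < f \<Longrightarrow> w $ k = 0"
  shows "B $$ (f,f) = \<mu>"
proof -
  have "\<mu> * w $ f = (\<Sum>k<n. B $$ (f,k) * w $ k)"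
    using arg_cong[OF eig, of "\<lambda>v. v $ f"] B w f by (simp add: scalar_prod_def lessThan_atLeast0)
  also have "\<dots> = B $$ (f,f) * w $ f"
  proof (rule sum_eq_single)
    fix k assume "k \<in> {..<n}" "k \<noteq> f"
    then show "B $$ (f,k) * w $ k = 0"
      using B low f before unfolding lower_triangular_def by (cases "k < f") auto
  qed (use f in auto)
  finally show ?thesis using f by simp
qed

lemma upper_triangular_eigenvalue_at_trailing_entry:
  fixes B :: "real mat"
  assumes B: "B \<in> carrier_mat n n" and up: "upper_triangular B"
    and w: "w \<in> carrier_vec n" and eig: "B *\<^sub>v w = \<mu> \<cdot>\<^sub>v w"
    and g: "g < n" "w $ g \<noteq> 0" and after: "\<And>k. g < k \<Longrightarrow> k < n \<Longrightarrow> w $ k = 0"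
  shows "B $$ (g,g) = \<mu>"
proof -
  have "\<mu> * w $ g = (\<Sum>k<n. B $$ (g,k) * w $ k)"
    using arg_cong[OF eig, of "\<lambda>v. v $ g"] B w g by (simp add: scalar_prod_def lessThan_atLeast0)
  also have "\<dots> = B $$ (g,g) * w $ g"
  proof (rule sum_eq_single)
    fix k assume "k \<in> {..<n}" "k \<noteq> g"
    then show "B $$ (g,k) * w $ k = 0"
      using B up g after by (cases "k < g") (auto dest: upper_triangularD)
  qed (use g in auto)
  finally show ?thesis using g by simp
qed

lemma vec_neq_0_entry:
  assumes "v \<in> carrier_vec n" "v \<noteq> 0\<^sub>v n"
  obtains k where "k < n" "v $ k \<noteq> 0"
proof -
  have "\<exists>k<n. v $ k \<noteq> 0"
  proof (rule ccontr)
    assume "\<not> (\<exists>k<n. v $ k \<noteq> 0)"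
    then have "v = 0\<^sub>v n" using assms(1) by (intro eq_vecI) auto
    with assms(2) show False ..
  qed
  then show ?thesis using that by blast
qed

lemma leading_entry_exists:
  assumes "v \<in> carrier_vec n" "v \<noteq> 0\<^sub>v n"
  shows "\<exists>f<n. v $ f \<noteq> 0 \<and> (\<forall>k<f. v $ k = 0)"
proof -
  obtain k where k: "k < n" "v $ k \<noteq> 0" using vec_neq_0_entry[OF assms] .
  define f where "f = (LEAST k. v $ k \<noteq> 0)"
  have "v $ f \<noteq> 0" "f \<le> k"
    using k LeastI[of "\<lambda>k. v $ k \<noteq> 0" k] Least_le[of "\<lambda>k. v $ k \<noteq> 0" k] unfolding f_def by auto
  moreover have "\<forall>l<f. v $ l = 0" unfolding f_def using not_less_Least by blast
  ultimately show ?thesis using k by (intro exI[of _ f]) auto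
qed

lemma trailing_entry_exists:
  assumes "v \<in> carrier_vec n" "v \<noteq> 0\<^sub>v n"
  shows "\<exists>g<n. v $ g \<noteq> 0 \<and> (\<forall>k. g < k \<longrightarrow> k < n \<longrightarrow> v $ k = 0)"
proof -
  define G where "G = {k. k < n \<and> v $ k \<noteq> 0}"
  have fin: "finite G" by (simp add: G_def)
  obtain k where "k < n" "v $ k \<noteq> 0" using vec_neq_0_entry[OF assms] .
  then have "G \<noteq> {}" by (auto simp: G_def)
  then have "Max G \<in> G" using Max_in[OF fin] by blast
  then have g: "Max G < n" "v $ Max G \<noteq> 0" by (simp_all add: G_def)
  have "v $ k = 0" if "Max G < k" "k < n" for k
  proof (rule ccontr)
    assume "v $ k \<noteq> 0"
    then have "k \<in> G" using that by (simp add: G_def)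
    then have "k \<le> Max G" by (rule Max_ge[OF fin])
    then show False using that by simp
  qed
  then show ?thesis using g by blast
qed

lemma scalar_prod_strictly_lower_eq_0:
  assumes X: "X \<in> carrier_mat n n" "strictly_lower_triangular X"
    and v: "v \<in> carrier_vec n" and w: "w \<in> carrier_vec n"
    and "\<And>a. g < a \<Longrightarrow> a < n \<Longrightarrow> v $ a = 0" and "\<And>b. b < g \<Longrightarrow> w $ b = 0"
  shows "v \<bullet> (X *\<^sub>v w) = 0"
proof -
  have "v \<bullet> (X *\<^sub>v w) = (\<Sum>a<n. \<Sum>b<n. v $ a * (X $$ (a,b) * w $ b))"
    using X v w by (simp add: scalar_prod_def lessThan_atLeast0 sum_distrib_left)
  also have "\<dots> = 0"
  proof (intro sum.neutral ballI)
    fix a b assume "a \<in> {..<n}" "b \<in> {..<n}"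
    then show "v $ a * (X $$ (a,b) * w $ b) = 0"
      using assms unfolding strictly_lower_triangular_def
      by (cases "g < a"; cases "b < g") auto
  qed
  finally show ?thesis .
qed

lemma conj_eq_of_mult_eq:
  fixes B W Wi D :: "real mat"
  assumes B: "B \<in> carrier_mat n n" and W: "W \<in> carrier_mat n n" and Wi: "Wi \<in> carrier_mat n n"
    and D: "D \<in> carrier_mat n n"
    and WiW: "Wi * W = 1\<^sub>m n" and WWi: "W * Wi = 1\<^sub>m n" and BW: "B * W = W * D"
  shows "Wi * B = D * Wi"
proof -
  have "Wi * B = Wi * ((B * W) * Wi)"
    using B WWi by (simp add: assoc_mult_mat[OF B W Wi])
  also have "\<dots> = (Wi * W) * D * Wi"
    unfolding BW using W Wi D by (simp add: assoc_mult_mat[of _ n n _ n _ n])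
  also have "\<dots> = D * Wi"
    using D Wi WiW by simp
  finally show ?thesis .
qed

lemma joint_eigenvalues_at_leading_entries:
  fixes B :: "nat \<Rightarrow> real mat" and \<Lambda> :: "nat \<Rightarrow> nat \<Rightarrow> real"
  assumes W: "W \<in> carrier_mat d d" and Wi: "Wi \<in> carrier_mat d d" and WiW: "Wi * W = 1\<^sub>m d"
    and B: "\<And>n. n \<in> S \<Longrightarrow> B n \<in> carrier_mat d d"
    and low: "\<And>n. n \<in> S \<Longrightarrow> lower_triangular (B n)"
    and eig: "\<And>n. n \<in> S \<Longrightarrow> B n * W = W * diag_of d (\<Lambda> n)"
    and sep: "\<And>i j. i < d \<Longrightarrow> j < d \<Longrightarrow> i \<noteq> j \<Longrightarrow> \<exists>n\<in>S. \<Lambda> n i \<noteq> \<Lambda> n j"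
  obtains first where "\<And>j. j < d \<Longrightarrow> first j < d" "\<And>j k. j < d \<Longrightarrow> k < first j \<Longrightarrow> col W j $ k = 0"
    "\<And>n j. n \<in> S \<Longrightarrow> j < d \<Longrightarrow> B n $$ (first j, first j) = \<Lambda> n j" "first ` {..<d} = {..<d}"
proof -
  obtain first where first: "\<And>j. j < d \<Longrightarrow> first j < d" "\<And>j. j < d \<Longrightarrow> col W j $ first j \<noteq> 0"
    "\<And>j k. j < d \<Longrightarrow> k < first j \<Longrightarrow> col W j $ k = 0"
  proof -
    have "\<exists>f<d. col W j $ f \<noteq> 0 \<and> (\<forall>k<f. col W j $ k = 0)" if j: "j < d" for j
      using leading_entry_exists[OF col_carrier_vec[OF j W] col_neq_0_of_left_inverse[OF Wi W WiW j]] .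
    then show ?thesis using that by metis
  qed
  have first_eigenvalue: "B n $$ (first j, first j) = \<Lambda> n j" if n: "n \<in> S" and j: "j < d" for n j
    by (rule lower_triangular_eigenvalue_at_leading_entry[OF B[OF n] low[OF n] col_carrier_vec[OF j W]
          col_eigenvector_of_mult_diag[OF B[OF n] W eig[OF n] j] first(1)[OF j] first(2)[OF j] first(3)[OF j]])
  have "inj_on first {..<d}"
    by (rule inj_onI) (metis first_eigenvalue sep lessThan_iff)
  then have "first ` {..<d} = {..<d}"
    using first(1) by (intro endo_inj_surj) auto
  with first(1,3) first_eigenvalue show ?thesis
    by (rule that)
qed

lemma joint_eigenvalue_at_trailing_entry:
  fixes B :: "nat \<Rightarrow> real mat" and \<Lambda> :: "nat \<Rightarrow> nat \<Rightarrow> real"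
  assumes W: "W \<in> carrier_mat d d" and Wi: "Wi \<in> carrier_mat d d"
    and WiW: "Wi * W = 1\<^sub>m d" and WWi: "W * Wi = 1\<^sub>m d"
    and B: "\<And>n. n \<in> S \<Longrightarrow> B n \<in> carrier_mat d d"
    and low: "\<And>n. n \<in> S \<Longrightarrow> lower_triangular (B n)"
    and eig: "\<And>n. n \<in> S \<Longrightarrow> B n * W = W * diag_of d (\<Lambda> n)"
    and i: "i < d"
  obtains g where "g < d" "\<And>k. g < k \<Longrightarrow> k < d \<Longrightarrow> row Wi i $ k = 0"
    "\<And>n. n \<in> S \<Longrightarrow> B n $$ (g,g) = \<Lambda> n i"
proof -
  have WiT: "transpose_mat W \<in> carrier_mat d d" "transpose_mat Wi \<in> carrier_mat d d"
    "transpose_mat W * transpose_mat Wi = 1\<^sub>m d"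
    using Wi W WiW transpose_mult[OF Wi W] by auto
  define v where "v = col (transpose_mat Wi) i"
  have v: "v = row Wi i"
    using Wi i by (simp add: v_def col_transpose)
  have "v \<in> carrier_vec d" "v \<noteq> 0\<^sub>v d"
    unfolding v_def using col_carrier_vec[OF i WiT(2)] col_neq_0_of_left_inverse[OF WiT i] by auto
  then obtain g where g: "g < d" "v $ g \<noteq> 0" "\<And>k. g < k \<Longrightarrow> k < d \<Longrightarrow> v $ k = 0"
    using trailing_entry_exists by blast
  have "B n $$ (g,g) = \<Lambda> n i" if n: "n \<in> S" for n
  proof -
    have "transpose_mat (B n) * transpose_mat Wi = transpose_mat Wi * diag_of d (\<Lambda> n)"
      using conj_eq_of_mult_eq[OF B[OF n] W Wi _ WiW WWi eig[OF n]] B[OF n] Wi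
      by (metis diag_of_carrier transpose_diag_of transpose_mult)
    moreover have "upper_triangular (transpose_mat (B n))"
      using low[OF n] B[OF n] unfolding lower_triangular_def by auto
    ultimately have "transpose_mat (B n) $$ (g,g) = \<Lambda> n i"
      using upper_triangular_eigenvalue_at_trailing_entry[OF _ _ _
          col_eigenvector_of_mult_diag[OF _ WiT(2) _ i] g[unfolded v_def]] B[OF n] i WiT(2)
      by simp
    then show ?thesis using B[OF n] g by simp
  qed
  with g(1,3) show ?thesis
    unfolding v by (rule that)
qed

text \<open>
  The leading entry of the \<open>i\<close>-th column of \<open>W\<close> and the trailing entry of the \<open>i\<close>-th row of
  \<open>W\<^sup>-\<^sup>1\<close> both sit at a diagonal position of the \<open>B n\<close> carrying the joint eigenvalue \<open>\<Lambda> \<cdot> i\<close>.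
  Joint eigenvalues are pairwise distinct, so the two positions coincide, and a strictly lower
  triangular \<open>X\<close> cannot connect the support of that row to the support of that column.
\<close>
lemma diag_conj_strictly_lower_eq_0:
  fixes B :: "nat \<Rightarrow> real mat" and \<Lambda> :: "nat \<Rightarrow> nat \<Rightarrow> real"
  assumes W: "W \<in> carrier_mat d d" and Wi: "Wi \<in> carrier_mat d d"
    and WiW: "Wi * W = 1\<^sub>m d" and WWi: "W * Wi = 1\<^sub>m d"
    and B: "\<And>n. n \<in> S \<Longrightarrow> B n \<in> carrier_mat d d"
    and low: "\<And>n. n \<in> S \<Longrightarrow> lower_triangular (B n)"
    and eig: "\<And>n. n \<in> S \<Longrightarrow> B n * W = W * diag_of d (\<Lambda> n)"
    and sep: "\<And>i j. i < d \<Longrightarrow> j < d \<Longrightarrow> i \<noteq> j \<Longrightarrow> \<exists>n\<in>S. \<Lambda> n i \<noteq> \<Lambda> n j"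
    and X: "X \<in> carrier_mat d d" "strictly_lower_triangular X"
    and i: "i < d"
  shows "(Wi * X * W) $$ (i,i) = 0"
proof -
  obtain first where first: "\<And>j. j < d \<Longrightarrow> first j < d" "\<And>j k. j < d \<Longrightarrow> k < first j \<Longrightarrow> col W j $ k = 0"
    "\<And>n j. n \<in> S \<Longrightarrow> j < d \<Longrightarrow> B n $$ (first j, first j) = \<Lambda> n j" "first ` {..<d} = {..<d}"
    by (rule joint_eigenvalues_at_leading_entries[OF W Wi WiW B low eig sep]) (assumption | rule that)+
  obtain g where g: "g < d" "\<And>k. g < k \<Longrightarrow> k < d \<Longrightarrow> row Wi i $ k = 0"
    "\<And>n. n \<in> S \<Longrightarrow> B n $$ (g,g) = \<Lambda> n i"
    by (rule joint_eigenvalue_at_trailing_entry[OF W Wi WiW WWi B low eig i]) (assumption | rule that)+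
  obtain j where j: "j < d" "g = first j"
    using first(4) g(1) by (metis imageE lessThan_iff)
  have "j = i"
  proof (rule ccontr)
    assume "j \<noteq> i"
    then obtain n where "n \<in> S" "\<Lambda> n i \<noteq> \<Lambda> n j"
      using sep[OF i j(1)] by auto
    then show False
      using first(3)[OF _ j(1)] g(3) j(2) by simp
  qed
  then have "g = first i" using j by simp
  then have "row Wi i \<bullet> (X *\<^sub>v col W i) = 0"
    using first(2)[OF i] by (intro scalar_prod_strictly_lower_eq_0[OF X row_carrier_vec[OF i Wi]
        col_carrier_vec[OF i W] g(2)]) auto
  moreover have "(Wi * X * W) $$ (i,i) = row Wi i \<bullet> col (X * W) i"
    using Wi X W i by (simp add: assoc_mult_mat[OF Wi X(1) W])
  ultimately show ?thesis
    using col_mult2[OF X(1) W i] by simp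
qed

section \<open>The commutator estimate\<close>

lemma frob_sq_diag_commutator:
  assumes Y: "Y \<in> carrier_mat d d"
  shows "frob_sq (diag_of d f * Y - Y * diag_of d f) = (\<Sum>i<d. \<Sum>j<d. (f i - f j)^2 * (Y $$ (i,j))^2)"
proof -
  have "(diag_of d f * Y - Y * diag_of d f) $$ (i,j) = (f i - f j) * Y $$ (i,j)" if "i < d" "j < d" for i j
  proof -
    have "(diag_of d f * Y - Y * diag_of d f) $$ (i,j) = (diag_of d f * Y) $$ (i,j) - (Y * diag_of d f) $$ (i,j)"
      using Y that by (intro index_minus_mat(1)) auto
    then show ?thesis
      unfolding diag_of_mult_index[OF Y that] mult_diag_of_index[OF Y that] by (simp add: algebra_simps)
  qed
  then show ?thesis
    unfolding frob_sq_def using Y by (auto simp: power_mult_distrib intro!: sum.cong)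
qed

lemma gamma_sep_le:
  assumes "i < d" "j < d" "i \<noteq> j"
  shows "gamma_sep d N \<Lambda> \<le> (\<Sum>n=1..N. (\<Lambda> n i - \<Lambda> n j)^2)"
proof -
  let ?h = "\<lambda>(i, i'). \<Sum>n=1..N. (\<Lambda> n i - \<Lambda> n i')^2"
  have set: "{(\<Sum>n=1..N. (\<Lambda> n i - \<Lambda> n i')^2) | i i'. i' < i \<and> i < d} = ?h ` {(i, i'). i' < i \<and> i < d}"
    by auto
  have fin: "finite {(i::nat, i'). i' < i \<and> i < d}"
    by (rule finite_subset[of _ "{..<d} \<times> {..<d}"]) auto
  have sym: "(\<Sum>n=1..N. (\<Lambda> n i - \<Lambda> n j)^2) = (\<Sum>n=1..N. (\<Lambda> n j - \<Lambda> n i)^2)"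
    by (simp add: power2_commute)
  show ?thesis
  proof (cases "j < i")
    case True
    then show ?thesis unfolding gamma_sep_def set
      by (intro Min_le finite_imageI fin) (use assms in auto)
  next
    case False
    then show ?thesis unfolding gamma_sep_def set sym
      by (intro Min_le finite_imageI fin) (use assms in auto)
  qed
qed

lemma sum_frob_sq_diag_commutator_ge:
  assumes Y: "Y \<in> carrier_mat d d" and diag: "\<And>i. i < d \<Longrightarrow> Y $$ (i,i) = 0"
  shows "gamma_sep d N \<Lambda> * frob_sq Y
    \<le> (\<Sum>n=1..N. frob_sq (diag_of d (\<Lambda> n) * Y - Y * diag_of d (\<Lambda> n)))"
proof -
  have "gamma_sep d N \<Lambda> * frob_sq Y = (\<Sum>i<d. \<Sum>j<d. gamma_sep d N \<Lambda> * (Y $$ (i,j))^2)"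
    using Y by (simp add: frob_sq_def sum_distrib_left)
  also have "\<dots> \<le> (\<Sum>i<d. \<Sum>j<d. (\<Sum>n=1..N. (\<Lambda> n i - \<Lambda> n j)^2) * (Y $$ (i,j))^2)"
  proof (intro sum_mono)
    fix i j assume "i \<in> {..<d}" "j \<in> {..<d}"
    then show "gamma_sep d N \<Lambda> * (Y $$ (i,j))^2 \<le> (\<Sum>n=1..N. (\<Lambda> n i - \<Lambda> n j)^2) * (Y $$ (i,j))^2"
      using diag gamma_sep_le[of i d j N \<Lambda>] by (cases "i = j") (auto intro: mult_right_mono)
  qed
  also have "\<dots> = (\<Sum>i<d. \<Sum>n=1..N. \<Sum>j<d. (\<Lambda> n i - \<Lambda> n j)^2 * (Y $$ (i,j))^2)"
    unfolding sum_distrib_right by (intro sum.cong refl sum.swap)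
  also have "\<dots> = (\<Sum>n=1..N. \<Sum>i<d. \<Sum>j<d. (\<Lambda> n i - \<Lambda> n j)^2 * (Y $$ (i,j))^2)"
    by (rule sum.swap)
  also have "\<dots> = (\<Sum>n=1..N. frob_sq (diag_of d (\<Lambda> n) * Y - Y * diag_of d (\<Lambda> n)))"
    by (simp add: frob_sq_diag_commutator[OF Y])
  finally show ?thesis .
qed

lemma gamma_sep_pos_imp_separated:
  assumes "0 < gamma_sep d N \<Lambda>" "i < d" "j < d" "i \<noteq> j"
  shows "\<exists>n\<in>{1..N}. \<Lambda> n i \<noteq> \<Lambda> n j"
proof (rule ccontr)
  assume "\<not> (\<exists>n\<in>{1..N}. \<Lambda> n i \<noteq> \<Lambda> n j)"
  then have "(\<Sum>n=1..N. (\<Lambda> n i - \<Lambda> n j)^2) = 0" by simp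
  then show False using gamma_sep_le[OF assms(2-4), of N \<Lambda>] assms(1) by simp
qed

lemma frob_sq_sandwich_le:
  assumes P: "P \<in> carrier_mat m n" and Z: "Z \<in> carrier_mat n k" and Q: "Q \<in> carrier_mat k l"
    and opP: "op_norm_sq_le P a" and opQ: "op_norm_sq_le (transpose_mat Q) b" and b: "0 \<le> b"
  shows "frob_sq (P * Z * Q) \<le> a * b * frob_sq Z"
proof -
  have "frob_sq (P * Z * Q) \<le> b * frob_sq (P * Z)"
    by (rule frob_sq_mult_right_le[OF mult_carrier_mat[OF P Z] Q opQ])
  also have "\<dots> \<le> b * (a * frob_sq Z)"
    using frob_sq_mult_left_le[OF P Z opP] b by (rule mult_left_mono)
  finally show ?thesis by (simp add: ac_simps)
qed

lemma conj_mult_eq: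
  fixes W D Wi :: "real mat"
  assumes W: "W \<in> carrier_mat n n" and D: "D \<in> carrier_mat n n" and Wi: "Wi \<in> carrier_mat n n"
    and WiW: "Wi * W = 1\<^sub>m n"
  shows "W * D * Wi * W = W * D"
  using assoc_mult_mat[OF mult_carrier_mat[OF W D] Wi W] W D by (simp add: WiW)

lemma conj_commutator:
  fixes B W Wi D X :: "real mat"
  assumes B: "B \<in> carrier_mat n n" and W: "W \<in> carrier_mat n n" and Wi: "Wi \<in> carrier_mat n n"
    and D: "D \<in> carrier_mat n n" and X: "X \<in> carrier_mat n n"
    and BW: "B * W = W * D" and WiB: "Wi * B = D * Wi"
  shows "Wi * (B * X - X * B) * W = D * (Wi * X * W) - (Wi * X * W) * D"
proof -
  note assoc = assoc_mult_mat[of _ n n _ n _ n]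
  have "Wi * (B * X - X * B) * W = (Wi * B) * X * W - Wi * X * (B * W)"
    using B W Wi X
    by (simp add: assoc mult_minus_distrib_mat[of _ n n _ n] minus_mult_distrib_mat[of _ n n _ _ n])
  also have "\<dots> = D * (Wi * X * W) - (Wi * X * W) * D"
    unfolding WiB BW using W Wi X D by (simp add: assoc)
  finally show ?thesis .
qed

lemma commutator_lower_bound:
  fixes B :: "nat \<Rightarrow> real mat" and \<Lambda> :: "nat \<Rightarrow> nat \<Rightarrow> real"
  assumes W: "W \<in> carrier_mat d d" and Wi: "Wi \<in> carrier_mat d d"
    and WiW: "Wi * W = 1\<^sub>m d" and WWi: "W * Wi = 1\<^sub>m d"
    and opW: "op_norm_sq_le W a" and opWi: "op_norm_sq_le Wi b" and a: "0 \<le> a" and b: "0 \<le> b"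
    and B: "\<And>n. n \<in> {1..N} \<Longrightarrow> B n = W * diag_of d (\<Lambda> n) * Wi"
    and low: "\<And>n. n \<in> {1..N} \<Longrightarrow> lower_triangular (B n)"
    and gpos: "0 < gamma_sep d N \<Lambda>"
    and X: "X \<in> carrier_mat d d" "strictly_lower_triangular X"
  shows "gamma_sep d N \<Lambda> * frob_sq X \<le> (a * b)^2 * (\<Sum>n=1..N. frob_sq (B n * X - X * B n))"
proof -
  define D where "D n = diag_of d (\<Lambda> n)" for n
  define Y where "Y = Wi * X * W"
  have D: "D n \<in> carrier_mat d d" for n by (simp add: D_def)
  have Y: "Y \<in> carrier_mat d d" using Wi X W by (simp add: Y_def)
  have Bc: "B n \<in> carrier_mat d d" if "n \<in> {1..N}" for n
    using B[OF that] mult_carrier_mat[OF mult_carrier_mat[OF W diag_of_carrier] Wi] by simp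
  have BW: "B n * W = W * D n" if n: "n \<in> {1..N}" for n
    using B[OF n] conj_mult_eq[OF W D Wi WiW] by (simp add: D_def)
  have "W * (Wi * Z) = Z" if "Z \<in> carrier_mat d d" for Z
    using that W Wi by (simp flip: assoc_mult_mat[of _ d d _ d _ d] add: WWi)
  then have "X = W * Y * Wi"
    using W Wi X by (simp add: Y_def assoc_mult_mat[of _ d d _ d _ d] WWi)
  then have XY: "frob_sq X \<le> a * b * frob_sq Y"
    using frob_sq_sandwich_le[OF W Y Wi opW op_norm_sq_le_transpose[OF Wi opWi b] b] by simp
  have YR: "frob_sq (D n * Y - Y * D n) \<le> a * b * frob_sq (B n * X - X * B n)" if n: "n \<in> {1..N}" for n
  proof -
    have "D n * Y - Y * D n = Wi * (B n * X - X * B n) * W"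
      unfolding Y_def
      by (rule conj_commutator[OF Bc[OF n] W Wi D X(1) BW[OF n] conj_eq_of_mult_eq[OF Bc[OF n] W Wi D WiW WWi BW[OF n]], symmetric])
    then show ?thesis
      using frob_sq_sandwich_le[OF Wi minus_carrier_mat[OF mult_carrier_mat[OF X(1) Bc[OF n]]] W
          opWi op_norm_sq_le_transpose[OF W opW a] a]
      by (simp add: ac_simps)
  qed
  have "Y $$ (i,i) = 0" if "i < d" for i
    unfolding Y_def
  proof (rule diag_conj_strictly_lower_eq_0[OF W Wi WiW WWi Bc low _ _ X that])
    show "B n * W = W * diag_of d (\<Lambda> n)" if "n \<in> {1..N}" for n
      using BW[OF that] by (simp add: D_def)
    show "\<exists>n\<in>{1..N}. \<Lambda> n i \<noteq> \<Lambda> n j" if "i < d" "j < d" "i \<noteq> j" for i j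
      by (rule gamma_sep_pos_imp_separated[OF gpos that])
  qed
  then have "gamma_sep d N \<Lambda> * frob_sq Y \<le> (\<Sum>n=1..N. frob_sq (D n * Y - Y * D n))"
    unfolding D_def by (rule sum_frob_sq_diag_commutator_ge[OF Y])
  also have "\<dots> \<le> a * b * (\<Sum>n=1..N. frob_sq (B n * X - X * B n))"
    unfolding sum_distrib_left by (intro sum_mono YR)
  finally have "a * b * (gamma_sep d N \<Lambda> * frob_sq Y) \<le> (a * b)^2 * (\<Sum>n=1..N. frob_sq (B n * X - X * B n))"
    using a b by (simp add: mult_left_mono power2_eq_square mult.assoc)
  moreover have "gamma_sep d N \<Lambda> * frob_sq X \<le> a * b * (gamma_sep d N \<Lambda> * frob_sq Y)"
    using XY gpos by (simp add: mult_left_mono mult.left_commute)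
  ultimately show ?thesis by simp
qed

section \<open>Vectorisation and the selection matrix \<open>P_low\<close>\<close>

lemma pair_index_less:
  assumes "i < d" "j < (d::nat)"
  shows "i + j * d < d * d"
proof -
  have "i + j * d < Suc j * d" using assms(1) by simp
  also have "\<dots> \<le> d * d" using assms(2) by (intro mult_le_mono1) simp
  finally show ?thesis .
qed

lemma pair_index_bounds:
  assumes "q < d * (d::nat)"
  shows "q mod d < d" "q div d < d"
proof -
  have "0 < d" using assms by (cases d) auto
  then show "q mod d < d" by simp
  show "q div d < d" using assms by (rule less_mult_imp_div_less)
qed

lemma sum_pair_index:
  fixes g :: "nat \<Rightarrow> 'a::comm_monoid_add"
  shows "(\<Sum>q<d * d. g q) = (\<Sum>j<d. \<Sum>i<d. g (i + j * d))"
proof -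
  have "(\<Sum>q<d * d. g q) = (\<Sum>j<d. sum g {j * d..<j * d + d})"
    by (rule sum.nat_group[symmetric])
  also have "\<dots> = (\<Sum>j<d. \<Sum>i<d. g (i + j * d))"
  proof (rule sum.cong[OF refl])
    fix j
    have "sum g {j * d..<j * d + d} = sum g {0 + j * d..<d + j * d}" by (simp add: add.commute)
    also have "\<dots> = (\<Sum>i=0..<d. g (i + j * d))" by (rule sum.shift_bounds_nat_ivl)
    finally show "sum g {j * d..<j * d + d} = (\<Sum>i<d. g (i + j * d))" by (simp add: lessThan_atLeast0)
  qed
  finally show ?thesis .
qed

definition vectorize :: "nat \<Rightarrow> real mat \<Rightarrow> real vec" where
  "vectorize d A = vec (d * d) (\<lambda>q. A $$ (q mod d, q div d))"

definition unvectorize :: "nat \<Rightarrow> real vec \<Rightarrow> real mat" where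
  "unvectorize d v = mat d d (\<lambda>(i,j). v $ (i + j * d))"

lemma vectorize_carrier [simp]: "vectorize d A \<in> carrier_vec (d * d)"
  by (simp add: vectorize_def)

lemma dim_vectorize [simp]: "dim_vec (vectorize d A) = d * d"
  by (simp add: vectorize_def)

lemma index_vectorize [simp]: "i < d \<Longrightarrow> j < d \<Longrightarrow> vectorize d A $ (i + j * d) = A $$ (i,j)"
  by (simp add: vectorize_def pair_index_less)

lemma vectorize_unvectorize:
  assumes "v \<in> carrier_vec (d * d)"
  shows "vectorize d (unvectorize d v) = v"
proof (rule eq_vecI)
  fix q assume "q < dim_vec v"
  then have q: "q < d * d" using assms by simp
  then have "q mod d < d" "q div d < d" by (rule pair_index_bounds)+
  then show "vectorize d (unvectorize d v) $ q = v $ q"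
    using q by (simp add: vectorize_def unvectorize_def mult.commute)
qed (use assms in \<open>simp add: vectorize_def\<close>)

lemma vectorize_minus:
  "A \<in> carrier_mat d d \<Longrightarrow> B \<in> carrier_mat d d \<Longrightarrow> vectorize d (A - B) = vectorize d A - vectorize d B"
  by (intro eq_vecI) (auto simp: vectorize_def pair_index_bounds)

lemma scalar_prod_vectorize:
  assumes "A \<in> carrier_mat d d"
  shows "vectorize d A \<bullet> vectorize d A = frob_sq A"
proof -
  have "vectorize d A \<bullet> vectorize d A = (\<Sum>q<d * d. vectorize d A $ q * vectorize d A $ q)"
    by (simp add: scalar_prod_def lessThan_atLeast0)
  also have "\<dots> = (\<Sum>j<d. \<Sum>i<d. (A $$ (i,j))^2)"
    unfolding sum_pair_index by (intro sum.cong refl) (simp add: power2_eq_square)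
  also have "\<dots> = frob_sq A"
    using assms unfolding frob_sq_def by (subst sum.swap) simp
  finally show ?thesis .
qed

lemma kron_carrier: "kron A B \<in> carrier_mat (dim_row A * dim_row B) (dim_col A * dim_col B)"
  by (simp add: kron_def)

lemma kron_mult_vectorize:
  assumes A: "A \<in> carrier_mat d d" and B: "B \<in> carrier_mat d d" and X: "X \<in> carrier_mat d d"
  shows "kron A B *\<^sub>v vectorize d X = vectorize d (B * X * transpose_mat A)"
proof -
  have entry: "(kron A B *\<^sub>v vectorize d X) $ (i + j * d) = (B * X * transpose_mat A) $$ (i,j)"
    if i: "i < d" and j: "j < d" for i j
  proof -
    have "(kron A B *\<^sub>v vectorize d X) $ (i + j * d)
        = (\<Sum>q<d * d. kron A B $$ (i + j * d, q) * vectorize d X $ q)"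
      using A B pair_index_less[OF i j] by (simp add: kron_def scalar_prod_def lessThan_atLeast0)
    also have "\<dots> = (\<Sum>b<d. \<Sum>a<d. A $$ (j,b) * B $$ (i,a) * X $$ (a,b))"
      unfolding sum_pair_index using A B i j
      by (intro sum.cong refl) (simp add: kron_def pair_index_less)
    also have "\<dots> = (B * X * transpose_mat A) $$ (i,j)"
      using A B X i j
      by (simp add: scalar_prod_def lessThan_atLeast0 sum_distrib_left sum_distrib_right ac_simps)
        (rule sum.swap)
    finally show ?thesis .
  qed
  show ?thesis
  proof (rule eq_vecI)
    fix q assume "q < dim_vec (vectorize d (B * X * transpose_mat A))"
    then have q: "q < d * d" by simp
    have q_eq: "q mod d + q div d * d = q" by simp
    show "(kron A B *\<^sub>v vectorize d X) $ q = vectorize d (B * X * transpose_mat A) $ q"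
      using entry[OF pair_index_bounds[OF q]] index_vectorize[OF pair_index_bounds[OF q]]
      unfolding q_eq by simp
  qed (use A B in \<open>simp add: kron_def\<close>)
qed

lemma set_low_positions: "set (low_positions d) = {q. q < d * d \<and> q div d < q mod d}"
  unfolding low_positions_def by auto

lemma distinct_low_positions: "distinct (low_positions d)"
  unfolding low_positions_def by simp

lemma length_low_positions: "length (low_positions d) = d * (d - 1) div 2"
proof -
  have "length (low_positions d) = card {q. q < d * d \<and> q div d < q mod d}"
    using distinct_card[OF distinct_low_positions] by (simp add: set_low_positions)
  also have "\<dots> = (\<Sum>q<d * d. if q div d < q mod d then 1 else 0)"
    by (simp add: sum.If_cases Int_def lessThan_def conj_commute)
  also have "\<dots> = (\<Sum>j<d. \<Sum>i<d. if j < i then 1 else 0)"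
    unfolding sum_pair_index by (intro sum.cong refl) simp
  also have "\<dots> = (\<Sum>i<d. \<Sum>j<d. if j < i then 1 else 0)"
    by (rule sum.swap)
  also have "\<dots> = (\<Sum>i<d. i)"
  proof (rule sum.cong[OF refl])
    fix i assume "i \<in> {..<d}"
    then have "{..<d} \<inter> {j. j < i} = {..<i}" by auto
    then show "(\<Sum>j<d. if j < i then 1 else 0) = i"
      by (simp add: sum.If_cases)
  qed
  also have "\<dots> = d * (d - 1) div 2"
  proof (cases d)
    case (Suc m)
    have "(\<Sum>i<d. i) = \<Sum>{0..m}" unfolding Suc by (simp add: lessThan_Suc_atMost atMost_atLeast0)
    then show ?thesis unfolding Suc by (simp add: gauss_sum_nat mult.commute)
  qed simp
  finally show ?thesis .
qed

lemma real_triangular_number: "real (d * (d - 1) div 2) = real (d * (d - 1)) / 2"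
proof -
  have "even (d * (d - 1))" by (cases "even d") auto
  then show ?thesis by (simp add: real_of_nat_div)
qed

lemma triangular_number_pos:
  assumes "2 \<le> d"
  shows "0 < d * (d - 1) div (2::nat)"
proof -
  have "2 * 1 \<le> d * (d - 1)" using assms by (intro mult_le_mono) auto
  then show ?thesis by simp
qed

lemma P_low_carrier: "P_low d \<in> carrier_mat (length (low_positions d)) (d * d)"
  unfolding P_low_def by simp

lemma dim_P_low [simp]: "dim_row (P_low d) = length (low_positions d)" "dim_col (P_low d) = d * d"
  unfolding P_low_def by simp_all

lemma P_low_mult_vec:
  assumes "v \<in> carrier_vec (d * d)" "r < length (low_positions d)"
  shows "(P_low d *\<^sub>v v) $ r = v $ (low_positions d ! r)"
proof -
  have "low_positions d ! r < d * d"
    using nth_mem[OF assms(2)] by (simp add: set_low_positions)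
  then show ?thesis
    using assms unfolding P_low_def
    by (simp add: scalar_prod_def lessThan_atLeast0 sum_eq_single[of _ "low_positions d ! r"])
qed

lemma transpose_P_low_mult_vec_nth:
  assumes "x \<in> carrier_vec (length (low_positions d))" "r < length (low_positions d)"
  shows "(transpose_mat (P_low d) *\<^sub>v x) $ (low_positions d ! r) = x $ r"
proof -
  have "low_positions d ! r < d * d"
    using nth_mem[OF assms(2)] by (simp add: set_low_positions)
  moreover have "low_positions d ! s = low_positions d ! r \<longleftrightarrow> s = r" if "s < length (low_positions d)" for s
    using distinct_low_positions assms(2) that by (simp add: nth_eq_iff_index_eq)
  ultimately show ?thesis
    using assms unfolding P_low_def
    by (simp add: scalar_prod_def lessThan_atLeast0 sum_eq_single[of _ r])
qed

lemma transpose_P_low_mult_vec_outside: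
  assumes "x \<in> carrier_vec (length (low_positions d))" "q < d * d" "q \<notin> set (low_positions d)"
  shows "(transpose_mat (P_low d) *\<^sub>v x) $ q = 0"
  using assms unfolding P_low_def by (auto simp: scalar_prod_def intro!: sum.neutral)

lemma P_low_mult_transpose: "P_low d * transpose_mat (P_low d) = 1\<^sub>m (length (low_positions d))"
proof (rule eq_matI)
  fix r s assume "r < dim_row (1\<^sub>m (length (low_positions d)))" "s < dim_col (1\<^sub>m (length (low_positions d)))"
  then have rs: "r < length (low_positions d)" "s < length (low_positions d)" by auto
  have "(P_low d * transpose_mat (P_low d)) $$ (r,s) = (P_low d *\<^sub>v col (transpose_mat (P_low d)) s) $ r"
    using rs P_low_carrier[of d] by simp
  also have "\<dots> = (if low_positions d ! s = low_positions d ! r then 1 else 0)"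
    using rs P_low_carrier[of d] by (subst P_low_mult_vec) (auto simp: P_low_def set_low_positions dest!: nth_mem)
  also have "\<dots> = 1\<^sub>m (length (low_positions d)) $$ (r,s)"
    using rs distinct_low_positions by (simp add: nth_eq_iff_index_eq)
  finally show "(P_low d * transpose_mat (P_low d)) $$ (r,s) = 1\<^sub>m (length (low_positions d)) $$ (r,s)" .
qed (use P_low_carrier in auto)

lemma scalar_prod_self_mult_vec_eq:
  fixes A :: "real mat"
  assumes A: "A \<in> carrier_mat m n" and v: "v \<in> carrier_vec n"
    and inv: "transpose_mat A *\<^sub>v (A *\<^sub>v v) = v"
  shows "(A *\<^sub>v v) \<bullet> (A *\<^sub>v v) = v \<bullet> v"
  using transpose_vec_mult_scalar[OF A v, of "A *\<^sub>v v"] A v inv by simp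

lemma P_low_isometric_on_low_support:
  assumes v: "v \<in> carrier_vec (d * d)"
    and supp: "\<And>q. q < d * d \<Longrightarrow> q \<notin> set (low_positions d) \<Longrightarrow> v $ q = 0"
  shows "(P_low d *\<^sub>v v) \<bullet> (P_low d *\<^sub>v v) = v \<bullet> v"
proof (rule scalar_prod_self_mult_vec_eq[OF P_low_carrier v])
  let ?w = "P_low d *\<^sub>v v"
  have w: "?w \<in> carrier_vec (length (low_positions d))"
    using mult_mat_vec_carrier[OF P_low_carrier v] .
  show "transpose_mat (P_low d) *\<^sub>v ?w = v"
  proof (rule eq_vecI)
    fix q assume "q < dim_vec v"
    then have q: "q < d * d" using v by simp
    show "(transpose_mat (P_low d) *\<^sub>v ?w) $ q = v $ q"
    proof (cases "q \<in> set (low_positions d)")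
      case True
      then obtain r where r: "r < length (low_positions d)" "q = low_positions d ! r"
        by (auto simp: in_set_conv_nth)
      then show ?thesis
        using transpose_P_low_mult_vec_nth[OF w r(1)] P_low_mult_vec[OF v r(1)] by simp
    next
      case False
      then show ?thesis
        using transpose_P_low_mult_vec_outside[OF w q] supp[OF q] by simp
    qed
  qed (use v P_low_carrier in simp)
qed

definition low_mat :: "nat \<Rightarrow> real vec \<Rightarrow> real mat" where
  "low_mat d x = unvectorize d (transpose_mat (P_low d) *\<^sub>v x)"

lemma low_mat_carrier: "low_mat d x \<in> carrier_mat d d"
  by (simp add: low_mat_def unvectorize_def)

lemma vectorize_low_mat:
  "x \<in> carrier_vec (length (low_positions d)) \<Longrightarrow> vectorize d (low_mat d x) = transpose_mat (P_low d) *\<^sub>v x"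
  unfolding low_mat_def by (intro vectorize_unvectorize mult_mat_vec_carrier[of _ _ "length (low_positions d)"]) (simp_all add: P_low_carrier)

lemma strictly_lower_triangular_low_mat:
  assumes "x \<in> carrier_vec (length (low_positions d))"
  shows "strictly_lower_triangular (low_mat d x)"
  unfolding strictly_lower_triangular_def
proof (intro allI impI)
  fix i j assume ij: "i < dim_row (low_mat d x)" "j < dim_col (low_mat d x)" "i \<le> j"
  then have "i < d" "j < d" using low_mat_carrier[of d x] by auto
  then show "low_mat d x $$ (i,j) = 0"
    using ij transpose_P_low_mult_vec_outside[OF assms pair_index_less]
    by (simp add: low_mat_def unvectorize_def set_low_positions)
qed

lemma frob_sq_low_mat:
  assumes x: "x \<in> carrier_vec (length (low_positions d))"
  shows "frob_sq (low_mat d x) = x \<bullet> x"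
proof -
  have "frob_sq (low_mat d x) = (transpose_mat (P_low d) *\<^sub>v x) \<bullet> (transpose_mat (P_low d) *\<^sub>v x)"
    using scalar_prod_vectorize[OF low_mat_carrier] vectorize_low_mat[OF x] by metis
  also have "\<dots> = x \<bullet> x"
  proof (rule scalar_prod_self_mult_vec_eq)
    show "transpose_mat (transpose_mat (P_low d)) *\<^sub>v (transpose_mat (P_low d) *\<^sub>v x) = x"
      using P_low_carrier[of d] x P_low_mult_transpose[of d]
      by (simp flip: assoc_mult_mat_vec[of _ _ "d * d" _ "length (low_positions d)"])
  qed (use x in auto)
  finally show ?thesis .
qed

lemma vectorize_strictly_lower_outside:
  assumes "A \<in> carrier_mat d d" "strictly_lower_triangular A" "q < d * d" "q \<notin> set (low_positions d)"
  shows "vectorize d A $ q = 0"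
  using assms pair_index_bounds[OF assms(3)]
  by (simp add: vectorize_def set_low_positions strictly_lower_triangular_def)

lemma strictly_lower_triangular_commutator:
  fixes B X :: "real mat"
  assumes B: "B \<in> carrier_mat d d" "lower_triangular B"
    and X: "X \<in> carrier_mat d d" "strictly_lower_triangular X"
  shows "strictly_lower_triangular (B * X - X * B)"
  unfolding strictly_lower_triangular_def
proof (intro allI impI)
  fix i j assume "i < dim_row (B * X - X * B)" "j < dim_col (B * X - X * B)" "i \<le> j"
  then have ij: "i < d" "j < d" "i \<le> j" using B X by auto
  have "(B * X) $$ (i,j) = (\<Sum>k<d. B $$ (i,k) * X $$ (k,j))"
    using B X ij by (simp add: scalar_prod_def lessThan_atLeast0)
  also have "\<dots> = 0"
  proof (intro sum.neutral ballI)
    fix k assume "k \<in> {..<d}"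
    then show "B $$ (i,k) * X $$ (k,j) = 0"
      using B X ij unfolding lower_triangular_def strictly_lower_triangular_def by (cases "i < k") auto
  qed
  finally have BX: "(B * X) $$ (i,j) = 0" .
  have "(X * B) $$ (i,j) = (\<Sum>k<d. X $$ (i,k) * B $$ (k,j))"
    using B X ij by (simp add: scalar_prod_def lessThan_atLeast0)
  also have "\<dots> = 0"
  proof (intro sum.neutral ballI)
    fix k assume "k \<in> {..<d}"
    then show "X $$ (i,k) * B $$ (k,j) = 0"
      using B X ij unfolding lower_triangular_def strictly_lower_triangular_def by (cases "i \<le> k") auto
  qed
  finally have XB: "(X * B) $$ (i,j) = 0" .
  show "(B * X - X * B) $$ (i,j) = 0"
    using BX XB B X ij by simp
qed

lemma t_mat_mult_vec_sq:
  fixes U M :: "real mat"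
  assumes U: "U \<in> carrier_mat d d" and M: "M \<in> carrier_mat d d"
    and low: "lower_triangular (transpose_mat U * transpose_mat M * U)"
    and x: "x \<in> carrier_vec (length (low_positions d))"
  defines "B \<equiv> transpose_mat U * transpose_mat M * U" and "X \<equiv> low_mat d x"
  shows "(t_mat d U M *\<^sub>v x) \<bullet> (t_mat d U M *\<^sub>v x) = frob_sq (B * X - X * B)"
proof -
  have Bc: "B \<in> carrier_mat d d" using U M by (simp add: B_def)
  have X: "X \<in> carrier_mat d d" "strictly_lower_triangular X"
    unfolding X_def by (rule low_mat_carrier, rule strictly_lower_triangular_low_mat[OF x])
  have R: "B * X - X * B \<in> carrier_mat d d"
    using minus_carrier_mat[OF mult_carrier_mat[OF X(1) Bc]] .
  have BT: "transpose_mat U * M * U = transpose_mat B"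
    using U M by (simp add: B_def transpose_mult[of _ d d _ d] assoc_mult_mat[of _ d d _ d _ d])
  define C where "C = kron (1\<^sub>m d) B - kron (transpose_mat B) (1\<^sub>m d)"
  have C: "C \<in> carrier_mat (d * d) (d * d)"
    using minus_carrier_mat[OF kron_carrier[of "transpose_mat B" "1\<^sub>m d"]] Bc by (simp add: C_def)
  have "C *\<^sub>v vectorize d X
      = kron (1\<^sub>m d) B *\<^sub>v vectorize d X - kron (transpose_mat B) (1\<^sub>m d) *\<^sub>v vectorize d X"
    using Bc kron_carrier[of "1\<^sub>m d" B] kron_carrier[of "transpose_mat B" "1\<^sub>m d"]
    unfolding C_def by (intro minus_mult_distrib_mat_vec) auto
  also have "\<dots> = vectorize d (B * X - X * B)"
    using Bc X by (simp add: kron_mult_vectorize vectorize_minus)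
  finally have kron: "C *\<^sub>v vectorize d X = vectorize d (B * X - X * B)" .
  have "t_mat d U M = P_low d * C * transpose_mat (P_low d)"
    unfolding t_mat_def BT B_def[symmetric] C_def ..
  then have "t_mat d U M *\<^sub>v x = P_low d *\<^sub>v (C *\<^sub>v (transpose_mat (P_low d) *\<^sub>v x))"
  proof -
    have PT: "transpose_mat (P_low d) \<in> carrier_mat (d * d) (length (low_positions d))"
      using P_low_carrier by simp
    show ?thesis
      using \<open>t_mat d U M = _\<close> assoc_mult_mat_vec[OF P_low_carrier mult_carrier_mat[OF C PT] x]
        assoc_mult_mat_vec[OF C PT x] assoc_mult_mat[OF P_low_carrier C PT] by simp
  qed
  also have "\<dots> = P_low d *\<^sub>v vectorize d (B * X - X * B)"
    unfolding X_def vectorize_low_mat[OF x, symmetric] kron[unfolded X_def] ..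
  finally have "(t_mat d U M *\<^sub>v x) \<bullet> (t_mat d U M *\<^sub>v x) = vectorize d (B * X - X * B) \<bullet> vectorize d (B * X - X * B)"
    using R strictly_lower_triangular_commutator[OF Bc low[folded B_def] X]
    by (simp add: P_low_isometric_on_low_support vectorize_strictly_lower_outside)
  then show ?thesis
    using scalar_prod_vectorize[OF R] by simp
qed

section \<open>Coercivity of \<open>T\<close>\<close>

lemma scalar_prod_foldr_add_mat:
  fixes F :: "nat \<Rightarrow> real mat"
  assumes F: "\<And>n. n \<in> set ns \<Longrightarrow> F n \<in> carrier_mat K K" and x: "x \<in> carrier_vec K"
  shows "foldr (\<lambda>n acc. F n + acc) ns (0\<^sub>m K K) \<in> carrier_mat K K \<and>
    x \<bullet> (foldr (\<lambda>n acc. F n + acc) ns (0\<^sub>m K K) *\<^sub>v x) = (\<Sum>n\<leftarrow>ns. x \<bullet> (F n *\<^sub>v x))"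
  using F
proof (induction ns)
  case Nil
  then show ?case using x by (simp add: scalar_prod_def)
next
  case (Cons m ns)
  let ?S = "foldr (\<lambda>n acc. F n + acc) ns (0\<^sub>m K K)"
  have S: "?S \<in> carrier_mat K K" "x \<bullet> (?S *\<^sub>v x) = (\<Sum>n\<leftarrow>ns. x \<bullet> (F n *\<^sub>v x))"
    using Cons by auto
  have Fm: "F m \<in> carrier_mat K K" using Cons.prems by simp
  have "x \<bullet> ((F m + ?S) *\<^sub>v x) = x \<bullet> (F m *\<^sub>v x) + x \<bullet> (?S *\<^sub>v x)"
    using Fm S(1) x by (simp add: add_mult_distrib_mat_vec scalar_prod_add_distrib[of _ K])
  then show ?case using S Fm by simp
qed

lemma msum_carrier_scalar_prod:
  fixes F :: "nat \<Rightarrow> real mat"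
  assumes F: "\<And>n. n \<in> {1..N} \<Longrightarrow> F n \<in> carrier_mat K K" and x: "x \<in> carrier_vec K"
  shows "msum K N F \<in> carrier_mat K K" "x \<bullet> (msum K N F *\<^sub>v x) = (\<Sum>n=1..N. x \<bullet> (F n *\<^sub>v x))"
proof -
  have "(\<Sum>n\<leftarrow>[1..<N+1]. x \<bullet> (F n *\<^sub>v x)) = (\<Sum>n=1..N. x \<bullet> (F n *\<^sub>v x))"
    unfolding interv_sum_list_conv_sum_set_nat set_upt by (simp add: atLeastLessThanSuc_atLeastAtMost)
  moreover have "\<And>n. n \<in> set [1..<N+1] \<Longrightarrow> F n \<in> carrier_mat K K"
    using F by (auto simp del: upt_Suc)
  ultimately show "msum K N F \<in> carrier_mat K K" "x \<bullet> (msum K N F *\<^sub>v x) = (\<Sum>n=1..N. x \<bullet> (F n *\<^sub>v x))"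
    using scalar_prod_foldr_add_mat[of "[1..<N+1]" F K x] x unfolding msum_def by auto
qed

lemma scalar_prod_gram:
  fixes A :: "real mat"
  assumes A: "A \<in> carrier_mat m n" and x: "x \<in> carrier_vec n"
  shows "x \<bullet> ((transpose_mat A * A) *\<^sub>v x) = (A *\<^sub>v x) \<bullet> (A *\<^sub>v x)"
proof -
  have "x \<bullet> ((transpose_mat A * A) *\<^sub>v x) = (transpose_mat A *\<^sub>v (A *\<^sub>v x)) \<bullet> x"
    using A x by (simp add: comm_scalar_prod[of x n])
  also have "\<dots> = (A *\<^sub>v x) \<bullet> (A *\<^sub>v x)"
    using transpose_vec_mult_scalar[OF A x mult_mat_vec_carrier[OF A x]] .
  finally show ?thesis .
qed

lemma norm_lower_bound_of_quadratic_form: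
  fixes T :: "real mat"
  assumes T: "T \<in> carrier_mat K K" and c: "0 \<le> c" and x: "x \<in> carrier_vec K"
    and quad: "c * (x \<bullet> x) \<le> x \<bullet> (T *\<^sub>v x)"
  shows "c * vnorm x \<le> vnorm (T *\<^sub>v x)"
proof -
  have "(c * (x \<bullet> x))^2 \<le> (x \<bullet> (T *\<^sub>v x))^2"
    using quad c scalar_prod_self_nonneg[of x] by (intro power_mono) auto
  also have "\<dots> \<le> (x \<bullet> x) * ((T *\<^sub>v x) \<bullet> (T *\<^sub>v x))"
    using cauchy_schwarz_vec[OF x, of "T *\<^sub>v x"] T x by simp
  finally have "(x \<bullet> x) * (c^2 * (x \<bullet> x)) \<le> (x \<bullet> x) * ((T *\<^sub>v x) \<bullet> (T *\<^sub>v x))"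
    by (simp add: power2_eq_square ac_simps)
  then have "c^2 * (x \<bullet> x) \<le> (T *\<^sub>v x) \<bullet> (T *\<^sub>v x)"
    using scalar_prod_self_nonneg[of x] scalar_prod_self_nonneg[of "T *\<^sub>v x"]
    by (cases "x \<bullet> x = 0") auto
  then have "sqrt ((c * vnorm x)^2) \<le> vnorm (T *\<^sub>v x)"
    using scalar_prod_self_nonneg[of x] by (simp add: power_mult_distrib vnorm_def)
  then show ?thesis using c vnorm_nonneg[of x] by simp
qed

lemma invertible_mat_of_norm_lower_bound:
  fixes T :: "real mat"
  assumes T: "T \<in> carrier_mat K K" and c: "0 < c"
    and bound: "\<And>x. x \<in> carrier_vec K \<Longrightarrow> c * vnorm x \<le> vnorm (T *\<^sub>v x)"
  shows "invertible_mat T"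
proof -
  have "det T \<noteq> 0"
  proof
    assume "det T = 0"
    then obtain v where v: "v \<in> carrier_vec K" "v \<noteq> 0\<^sub>v K" "T *\<^sub>v v = 0\<^sub>v K"
      using det_0_iff_vec_prod_zero_field[OF T] by auto
    have "c * vnorm v \<le> 0"
      using bound[OF v(1)] v(3) by (simp add: vnorm_def)
    then have "vnorm v = 0" using c vnorm_nonneg[of v] by (simp add: mult_le_0_iff)
    then show False using v scalar_prod_self_eq_0_iff[OF v(1)] by (simp add: vnorm_def)
  qed
  then obtain B where B: "B \<in> carrier_mat K K" "T * B = 1\<^sub>m K" "B * T = 1\<^sub>m K"
    using det_non_zero_imp_unit[OF T, of undefined] unfolding Units_def ring_mat_def by auto
  have "inverts_mat T B" "inverts_mat B T"
    using T B unfolding inverts_mat_def by simp_all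
  then show ?thesis
    using T unfolding invertible_mat_def by auto
qed

lemma minv_carrier_mult:
  fixes T :: "real mat"
  assumes T: "T \<in> carrier_mat K K" and inv: "invertible_mat T"
  shows "minv T \<in> carrier_mat K K" "T * minv T = 1\<^sub>m K"
proof -
  have dT: "dim_row T = K" "dim_col T = K" using T by simp_all
  obtain B where "inverts_mat T B" "inverts_mat B T"
    using inv unfolding invertible_mat_def by blast
  then have B: "T * B = 1\<^sub>m K" "B * T = 1\<^sub>m (dim_row B)"
    unfolding inverts_mat_def dT by simp_all
  have "dim_col B = dim_col (T * B)" by simp
  also have "\<dots> = K" unfolding B(1) by simp
  finally have cB: "dim_col B = K" .
  have "dim_row B = dim_col (B * T)" unfolding B(2) by simp
  also have "\<dots> = K" using dT by simp
  finally have rB: "dim_row B = K" .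
  have "B \<in> carrier_mat K K \<and> T * B = 1\<^sub>m K \<and> B * T = 1\<^sub>m K"
    using carrier_matI[OF rB cB] B unfolding rB by blast
  then have "minv T \<in> carrier_mat K K \<and> T * minv T = 1\<^sub>m K \<and> minv T * T = 1\<^sub>m K"
    unfolding minv_def dT by (rule someI)
  then show "minv T \<in> carrier_mat K K" "T * minv T = 1\<^sub>m K" by simp_all
qed

lemma frob_norm_minv_le:
  fixes T :: "real mat"
  assumes T: "T \<in> carrier_mat K K" and inv: "invertible_mat T" and c: "0 < c"
    and bound: "\<And>x. x \<in> carrier_vec K \<Longrightarrow> c * vnorm x \<le> vnorm (T *\<^sub>v x)"
  shows "frob_norm (minv T) \<le> sqrt (real K) / c"
proof -
  note Ti = minv_carrier_mult[OF T inv]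
  have col: "col (minv T) j \<bullet> col (minv T) j \<le> 1 / c^2" if j: "j < K" for j
  proof -
    have "T *\<^sub>v col (minv T) j = unit_vec K j"
      using col_mult2[OF T Ti(1) j] Ti(2) j by simp
    then have "c * vnorm (col (minv T) j) \<le> 1"
      using bound[of "col (minv T) j"] Ti(1) j by (simp add: vnorm_def)
    then have "(c * vnorm (col (minv T) j))^2 \<le> 1"
      using c vnorm_nonneg by (simp add: power_le_one)
    then show ?thesis
      using c by (simp add: power_mult_distrib vnorm_square field_simps)
  qed
  have "frob_sq (minv T) \<le> real K * (1 / c^2)"
    using sum_mono[of "{..<K}" _ "\<lambda>_. 1 / c^2", OF col] by (simp add: frob_sq_cols[OF Ti(1)])
  then have "frob_norm (minv T) \<le> sqrt (real K * (1 / c^2))"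
    by (simp add: frob_norm_eq_sqrt_frob_sq)
  also have "\<dots> = sqrt (real K) / c"
    using c by (simp add: real_sqrt_mult real_sqrt_divide)
  finally show ?thesis .
qed

lemma lower_triangular_transpose_of_low_part_eq_0:
  assumes A: "A \<in> carrier_mat d d" and low: "low_part A = 0\<^sub>m d d"
  shows "lower_triangular (transpose_mat A)"
  unfolding lower_triangular_def
proof (intro allI impI)
  fix i j assume "i < dim_row (transpose_mat A)" "j < dim_col (transpose_mat A)" "i < j"
  then have ij: "i < d" "j < d" "i < j" using A by auto
  have "A $$ (j,i) = low_part A $$ (j,i)"
    using A ij unfolding low_part_def by simp
  then show "transpose_mat A $$ (i,j) = 0"
    using A ij low by simp
qed

lemma transpose_conj_diag_of:
  fixes U V Vi :: "real mat"
  assumes U: "U \<in> carrier_mat d d" and V: "V \<in> carrier_mat d d" and Vi: "Vi \<in> carrier_mat d d"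
  shows "transpose_mat U * transpose_mat (V * diag_of d f * Vi) * U
    = (transpose_mat U * transpose_mat Vi) * diag_of d f * (transpose_mat V * U)"
proof -
  have "transpose_mat (V * diag_of d f * Vi) = transpose_mat Vi * diag_of d f * transpose_mat V"
    using transpose_mult[OF mult_carrier_mat[OF V diag_of_carrier] Vi] transpose_mult[OF V diag_of_carrier]
      V Vi by (simp add: assoc_mult_mat[of _ d d _ d _ d])
  then show ?thesis
    using U V Vi by (simp add: assoc_mult_mat[of _ d d _ d _ d] mult_carrier_mat[of _ d d _ d])
qed

lemma conj_inverse_pair_bounds:
  fixes U V Vi :: "real mat"
  assumes d: "0 < d" and U: "U \<in> carrier_mat d d" and Uorth: "transpose_mat U * U = 1\<^sub>m d"
    and V: "V \<in> carrier_mat d d" and Vi: "Vi \<in> carrier_mat d d"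
    and VVi: "V * Vi = 1\<^sub>m d" and ViV: "Vi * V = 1\<^sub>m d"
  defines "W \<equiv> transpose_mat U * transpose_mat Vi" and "Wi \<equiv> transpose_mat V * U"
  shows "W \<in> carrier_mat d d" "Wi \<in> carrier_mat d d" "Wi * W = 1\<^sub>m d" "W * Wi = 1\<^sub>m d"
    "op_norm_sq_le W (1 / sigma_min V ^ 2)" "op_norm_sq_le Wi (sigma_max V ^ 2)"
proof -
  have UT: "transpose_mat U \<in> carrier_mat d d" "U * transpose_mat U = 1\<^sub>m d"
    using U Uorth by (auto intro: mat_mult_left_right_inverse)
  have VT: "transpose_mat V \<in> carrier_mat d d" "transpose_mat Vi \<in> carrier_mat d d"
    "transpose_mat Vi * transpose_mat V = 1\<^sub>m d" "transpose_mat V * transpose_mat Vi = 1\<^sub>m d"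
    using V Vi transpose_mult[OF V Vi, symmetric] transpose_mult[OF Vi V, symmetric]
    by (simp_all add: VVi ViV)
  show W: "W \<in> carrier_mat d d" and Wi: "Wi \<in> carrier_mat d d"
    using U V Vi by (simp_all add: W_def Wi_def)
  have "Wi * W = transpose_mat V * ((U * transpose_mat U) * transpose_mat Vi)"
    unfolding W_def Wi_def
    using assoc_mult_mat[OF VT(1) U mult_carrier_mat[OF UT(1) VT(2)]] assoc_mult_mat[OF U UT(1) VT(2)]
    by simp
  then show "Wi * W = 1\<^sub>m d"
    using UT VT by simp
  have "W * Wi = transpose_mat U * ((transpose_mat Vi * transpose_mat V) * U)"
    unfolding W_def Wi_def
    using assoc_mult_mat[OF UT(1) VT(2) mult_carrier_mat[OF VT(1) U]] assoc_mult_mat[OF VT(2) VT(1) U]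
    by simp
  then show "W * Wi = 1\<^sub>m d"
    using U VT Uorth by simp
  have pos: "0 < sigma_min V" by (rule sigma_min_pos[OF d V Vi ViV])
  have "op_norm_sq_le (transpose_mat Vi) (1 / sigma_min V ^ 2)"
    using op_norm_sq_le_transpose[OF Vi op_norm_sq_le_inverse[OF V Vi VVi pos]] by simp
  then show "op_norm_sq_le W (1 / sigma_min V ^ 2)"
    using op_norm_sq_le_mult[OF UT(1) VT(2) op_norm_sq_le_orthogonal[OF UT(1)]] UT(2)
    by (simp add: W_def)
  have "op_norm_sq_le (transpose_mat V) (sigma_max V ^ 2)"
    using op_norm_sq_le_transpose[OF V op_norm_sq_le_sigma_max[OF V]] by simp
  then show "op_norm_sq_le Wi (sigma_max V ^ 2)"
    using op_norm_sq_le_mult[OF VT(1) U _ op_norm_sq_le_orthogonal[OF U Uorth]] by (simp add: Wi_def)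
qed

lemma t_mat_carrier:
  assumes "U \<in> carrier_mat d d"
  shows "t_mat d U M \<in> carrier_mat (length (low_positions d)) (length (low_positions d))"
  unfolding t_mat_def
  by (rule mult_carrier_mat[OF mult_carrier_mat[OF P_low_carrier minus_carrier_mat]])
    (use assms in \<open>auto simp: kron_def\<close>)

lemma quadratic_form_sum_gram_t_mat_ge:
  fixes V Vi U :: "real mat" and \<Lambda> :: "nat \<Rightarrow> nat \<Rightarrow> real" and M :: "nat \<Rightarrow> real mat"
  assumes d: "0 < d"
    and V: "V \<in> carrier_mat d d" and Vi: "Vi \<in> carrier_mat d d"
    and VVi: "V * Vi = 1\<^sub>m d" and ViV: "Vi * V = 1\<^sub>m d"
    and M: "\<And>n. n \<in> {1..N} \<Longrightarrow> M n = V * diag_of d (\<Lambda> n) * Vi"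
    and gpos: "gamma_sep d N \<Lambda> > 0"
    and U: "U \<in> carrier_mat d d" and Uorth: "transpose_mat U * U = 1\<^sub>m d"
    and Ulow: "\<And>n. n \<in> {1..N} \<Longrightarrow> low_part (transpose_mat U * M n * U) = 0\<^sub>m d d"
    and x: "x \<in> carrier_vec (length (low_positions d))"
  shows "gamma_sep d N \<Lambda> / kappa V ^ 4 * (x \<bullet> x)
    \<le> x \<bullet> (msum (length (low_positions d)) N (\<lambda>n. transpose_mat (t_mat d U (M n)) * t_mat d U (M n)) *\<^sub>v x)"
proof -
  define B where "B n = transpose_mat U * transpose_mat (M n) * U" for n
  define X where "X = low_mat d x"
  define W Wi where "W = transpose_mat U * transpose_mat Vi" and "Wi = transpose_mat V * U"
  note WWi = conj_inverse_pair_bounds[OF d U Uorth V Vi VVi ViV, folded W_def Wi_def]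
  have Mc: "M n \<in> carrier_mat d d" if "n \<in> {1..N}" for n
    using M[OF that] mult_carrier_mat[OF mult_carrier_mat[OF V diag_of_carrier] Vi] by simp
  have low: "lower_triangular (B n)" if n: "n \<in> {1..N}" for n
    using lower_triangular_transpose_of_low_part_eq_0[OF _ Ulow[OF n]] U Mc[OF n]
    by (simp add: B_def transpose_mult[of _ d d _ d] assoc_mult_mat[of _ d d _ d _ d])
  have t: "t_mat d U (M n) \<in> carrier_mat (length (low_positions d)) (length (low_positions d))" for n
    by (rule t_mat_carrier[OF U])
  have "gamma_sep d N \<Lambda> * frob_sq X
      \<le> ((1 / sigma_min V ^ 2) * sigma_max V ^ 2)^2 * (\<Sum>n=1..N. frob_sq (B n * X - X * B n))"
  proof (rule commutator_lower_bound[OF WWi(1-6) _ _ _ low gpos])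
    show "B n = W * diag_of d (\<Lambda> n) * Wi" if "n \<in> {1..N}" for n
      unfolding B_def M[OF that] W_def Wi_def by (rule transpose_conj_diag_of[OF U V Vi])
    show "X \<in> carrier_mat d d" "strictly_lower_triangular X"
      unfolding X_def by (rule low_mat_carrier, rule strictly_lower_triangular_low_mat[OF x])
  qed simp_all
  also have "((1 / sigma_min V ^ 2) * sigma_max V ^ 2)^2 = kappa V ^ 4"
    by (simp add: kappa_def power_divide flip: power_mult)
  finally have "gamma_sep d N \<Lambda> * frob_sq X \<le> kappa V ^ 4 * (\<Sum>n=1..N. frob_sq (B n * X - X * B n))" .
  then have "gamma_sep d N \<Lambda> / kappa V ^ 4 * frob_sq X \<le> (\<Sum>n=1..N. frob_sq (B n * X - X * B n))"
    using kappa_pos[OF d V Vi ViV] by (simp add: field_simps)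
  also have "\<dots> = (\<Sum>n=1..N. x \<bullet> ((transpose_mat (t_mat d U (M n)) * t_mat d U (M n)) *\<^sub>v x))"
  proof (rule sum.cong[OF refl])
    fix n assume n: "n \<in> {1..N}"
    show "frob_sq (B n * X - X * B n) = x \<bullet> ((transpose_mat (t_mat d U (M n)) * t_mat d U (M n)) *\<^sub>v x)"
      using scalar_prod_gram[OF t x] t_mat_mult_vec_sq[OF U Mc[OF n] low[OF n, unfolded B_def] x]
      by (simp add: B_def X_def)
  qed
  also have "\<dots> = x \<bullet> (msum (length (low_positions d)) N (\<lambda>n. transpose_mat (t_mat d U (M n)) * t_mat d U (M n)) *\<^sub>v x)"
    by (rule msum_carrier_scalar_prod(2)[symmetric, OF mult_carrier_mat[OF _ t] x]) (use t in simp)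
  finally show ?thesis
    using frob_sq_low_mat[OF x] by (simp add: X_def)
qed

theorem lemma6:
  fixes d N :: nat and V Vi U T :: "real mat" and \<Lambda> :: "nat \<Rightarrow> nat \<Rightarrow> real"
    and M :: "nat \<Rightarrow> real mat"
  assumes d2: "d \<ge> 2"
    and V: "V \<in> carrier_mat d d" and Vi: "Vi \<in> carrier_mat d d"
    and VVi: "V * Vi = 1\<^sub>m d" and ViV: "Vi * V = 1\<^sub>m d"
    and M: "\<And>n. n \<in> {1..N} \<Longrightarrow> M n = V * diag_of d (\<Lambda> n) * Vi"
    and gpos: "gamma_sep d N \<Lambda> > 0"
    and U: "U \<in> carrier_mat d d" and Uorth: "transpose_mat U * U = 1\<^sub>m d"
    and Ulow: "\<And>n. n \<in> {1..N} \<Longrightarrow> low_part (transpose_mat U * M n * U) = 0\<^sub>m d d"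
    and T: "T = msum (d * (d - 1) div 2) N (\<lambda>n. transpose_mat (t_mat d U (M n)) * t_mat d U (M n))"
  shows "invertible_mat T
    \<and> sigma_min T \<ge> gamma_sep d N \<Lambda> / kappa V ^ 4
    \<and> frob_norm (minv T) \<le> sqrt (real (d * (d - 1)) / 2) * kappa V ^ 4 / gamma_sep d N \<Lambda>"
proof -
  define K where "K = d * (d - 1) div 2"
  define c where "c = gamma_sep d N \<Lambda> / kappa V ^ 4"
  have d: "0 < d" using d2 by simp
  have K: "length (low_positions d) = K" "0 < K"
    using length_low_positions triangular_number_pos[OF d2] by (simp_all add: K_def)
  have c: "0 < c"
    using gpos kappa_pos[OF d V Vi ViV] by (simp add: c_def)
  have "transpose_mat (t_mat d U (M n)) * t_mat d U (M n) \<in> carrier_mat K K" for n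
    using t_mat_carrier[OF U, of "M n"] unfolding K(1) by simp
  then have Tc: "T \<in> carrier_mat K K"
    unfolding T K_def[symmetric] by (rule msum_carrier_scalar_prod(1)[OF _ zero_carrier_vec])
  have bound: "c * vnorm x \<le> vnorm (T *\<^sub>v x)" if x: "x \<in> carrier_vec K" for x
  proof (rule norm_lower_bound_of_quadratic_form[OF Tc less_imp_le[OF c] x])
    show "c * (x \<bullet> x) \<le> x \<bullet> (T *\<^sub>v x)"
      using quadratic_form_sum_gram_t_mat_ge[OF d V Vi VVi ViV M gpos U Uorth Ulow] x
      unfolding T c_def K(1) K_def by simp
  qed
  have inv: "invertible_mat T"
    by (rule invertible_mat_of_norm_lower_bound[OF Tc c bound])
  moreover have "c \<le> sigma_min T"
    by (rule sigma_min_greatest[OF K(2) Tc bound])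
  moreover have "frob_norm (minv T) \<le> sqrt (real (d * (d - 1)) / 2) / c"
    using frob_norm_minv_le[OF Tc inv c bound] unfolding K_def real_triangular_number .
  ultimately show ?thesis
    by (simp add: c_def)
qed

end
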